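(* Let $\Sigma$ be any $(\mathbf d,\mathbf z)$-cluster pattern in a semifield $\mathbb P$ with initial seed $(\mathbf x,\mathbf y,B)$ (here $\mathbf y\in\mathbb P^n$ and $\mathbf z$ have values in $\mathbb P$), with exchange matrices $B_t=(b^t_{ij})$ and $y$-variables $y^t_i$. Let $C^t=(c^t_{ij})$ and $F^t_j$ be the $C$-matrices and $F$-polynomials of the $(\mathbf d,\mathbf z)$-cluster pattern with principal coefficients having the same initial exchange matrix $B$ and the same $\mathbf d$. Then for all $t$ and $i$, $$y^t_i=\prod_{j=1}^ny_j^{c^t_{ji}}\prod_{j=1}^nF^t_j|_{\mathbb P}(\mathbf y,\mathbf z)^{b^t_{ji}}.$$ Moreover, the $Y$-functions satisfy $Y^t_i(\mathbf y,\mathbf z)=\prod_jy_j^{c^t_{ji}}\prod_jF^t_j(\mathbf y,\mathbf z)^{b^t_{ji}}$ as rational functions in the formal variables.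
   Context: All matrices integer and $[a]_+=\max(a,0)$. A semifield $\mathbb P$ is an abelian multiplicative group with a commutative associative $\oplus$ over which multiplication distributes; $\mathbb Z\mathbb P$ its group ring, $\mathbb Q\mathbb P$ its fraction field, $\mathcal F=\mathbb Q\mathbb P(w_1,\dots,w_n)$. A seed in $\mathbb P$ is $(\mathbf x,\mathbf y,B)$ with $B=(b_{ij})$ skew-symmetrizable $n\times n$, $\mathbf x\in\mathcal F^n$, $\mathbf y\in\mathbb P^n$. Mutation data: positive integers $\mathbf d$ and $z_{i,s}\in\mathbb P$ ($1\le s\le d_i-1$) with $z_{i,s}=z_{i,d_i-s}$, $z_{i,0}=z_{i,d_i}=1$. The $(\mathbf d,\mathbf z)$-mutation $\mu_k(\mathbf{x},\mathbf{y},B)=(\mathbf{x}',\mathbf{y}',B')$: $b'_{ij}=-b_{ij}$ if $i=k$ or $j=k$, else $b'_{ij}=b_{ij}+d_k([-b_{ik}]_+b_{kj}+b_{ik}[b_{kj}]_+)$; $y'_k=y_k^{-1}$, $y'_i=y_i(y_k^{[\varepsilon b_{ki}]_+})^{d_k}(\bigoplus_{s=0}^{d_k}z_{k,s}y_k^{\varepsilon s})^{-b_{ki}}$ ($i\ne k$); $x'_i=x_i$ ($i\ne k$), $x'_k=x_k^{-1}(\prod_jx_j^{[-\varepsilon b_{jk}]_+})^{d_k}\frac{\sum_{s=0}^{d_k}z_{k,s}\hat y_k^{\varepsilon s}}{\bigoplus_{s=0}^{d_k}z_{k,s}y_k^{\varepsilon s}}$, $\hat y_i=y_i\prod_jx_j^{b_{ji}}$,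 $\varepsilon=\pm1$. $\mathbb T_n$ is the $n$-regular tree with edges labeled $1,\dots,n$, distinct labels at each vertex; a $(\mathbf d,\mathbf z)$-cluster pattern assigns seeds $(\mathbf x_t,\mathbf y_t,B_t)$, $\mathbf y_t=(y^t_i)$, to vertices related by $\mu_k$ along edges labeled $k$, initial seed at a fixed $t_0$. Principal coefficients: for formal variables $y_1,\dots,y_n$, $z_{i,s}$ ($z_{i,s}=z_{i,d_i-s}$), $\mathrm{Trop}(\mathbf y,\mathbf z)$ is the free abelian group they generate with $\oplus$ the componentwise minimum of exponents; the pattern with principal coefficients lives in $\mathrm{Trop}(\mathbf y,\mathbf z)$ with initial seed $(\mathbf x,\mathbf y,B)$ ($\mathbf y$ the generators). Its $y^t_j$ are Laurent monomials $\prod_iy_i^{c^t_{ij}}$ in $\mathbf y$ alone, defining $C^t=(c^t_{ij})$. Its $x^t_i$ are $X$-functions $X^t_i\in\mathbb Z[x_1^{\pm1},\dots,x_n^{\pm1},\mathbf y,\mathbf z]$, and $F^t_i(\mathbf y,\mathbf z)=X^t_i(1,\dots,1,\mathbf y,\mathbf z)$. Each $F^t_i$ is a subtraction-free rational expression in $\mathbf y,\mathbf z$, so it can be evaluated in any semifield: $F^t_i|_{\mathbb P}(\mathbf y,\mathbf z)$ denotes the value in $\mathbb P$ with $+$ replaced by $\oplus$ and the variables replaced by the given elements of $\mathbb P$. $Y^t_i(\mathbf y,\mathbf z)$ (the $Y$-functions) are the $y$-variables of the $(\mathbf d,\mathbf z)$-cluster pattern with initial seed $(\mathbf x,\mathbf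 y,B)$ in the universal semifield $\mathbb Q_{\mathrm{sf}}(\mathbf y,\mathbf z)$ of subtraction-free rational functions in the formal variables. *)

theory Defs
  imports Complex_Main
begin

record 'p semifield_ops =
  sf_carrier :: "'p set"
  sf_mul :: "'p \<Rightarrow> 'p \<Rightarrow> 'p"
  sf_one :: "'p"
  sf_inv :: "'p \<Rightarrow> 'p"
  sf_add :: "'p \<Rightarrow> 'p \<Rightarrow> 'p"

definition semifield :: "('p, 'm) semifield_ops_scheme \<Rightarrow> bool" where
  "semifield P \<longleftrightarrow>
     sf_one P \<in> sf_carrier P \<and>
     (\<forall>a\<in>sf_carrier P. \<forall>b\<in>sf_carrier P. sf_mul P a b \<in> sf_carrier P) \<and>
     (\<forall>a\<in>sf_carrier P. sf_inv P a \<in> sf_carrier P) \<and>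
     (\<forall>a\<in>sf_carrier P. \<forall>b\<in>sf_carrier P. sf_add P a b \<in> sf_carrier P) \<and>
     (\<forall>a\<in>sf_carrier P. \<forall>b\<in>sf_carrier P. \<forall>c\<in>sf_carrier P.
        sf_mul P (sf_mul P a b) c = sf_mul P a (sf_mul P b c)) \<and>
     (\<forall>a\<in>sf_carrier P. \<forall>b\<in>sf_carrier P. sf_mul P a b = sf_mul P b a) \<and>
     (\<forall>a\<in>sf_carrier P. sf_mul P (sf_one P) a = a) \<and>
     (\<forall>a\<in>sf_carrier P. sf_mul P a (sf_inv P a) = sf_one P) \<and>
     (\<forall>a\<in>sf_carrier P. \<forall>b\<in>sf_carrier P. \<forall>c\<in>sf_carrier P.
        sf_add P (sf_add P a b) c = sf_add P a (sf_add P b c)) \<and>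
     (\<forall>a\<in>sf_carrier P. \<forall>b\<in>sf_carrier P. sf_add P a b = sf_add P b a) \<and>
     (\<forall>a\<in>sf_carrier P. \<forall>b\<in>sf_carrier P. \<forall>c\<in>sf_carrier P.
        sf_mul P a (sf_add P b c) = sf_add P (sf_mul P a b) (sf_mul P a c))"

definition sf_pow :: "('p, 'm) semifield_ops_scheme \<Rightarrow> 'p \<Rightarrow> int \<Rightarrow> 'p" where
  "sf_pow P a k = (if 0 \<le> k then (sf_mul P a ^^ nat k) (sf_one P)
                   else (sf_mul P (sf_inv P a) ^^ nat (- k)) (sf_one P))"

definition sf_prod :: "('p, 'm) semifield_ops_scheme \<Rightarrow> (nat \<Rightarrow> 'p) \<Rightarrow> nat \<Rightarrow> 'p" where
  "sf_prod P f n = foldr (\<lambda>j acc. sf_mul P (f j) acc) [0..<n] (sf_one P)"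

definition sf_sum :: "('p, 'm) semifield_ops_scheme \<Rightarrow> (nat \<Rightarrow> 'p) \<Rightarrow> nat \<Rightarrow> 'p" where
  "sf_sum P f d = foldr (\<lambda>s acc. sf_add P (f s) acc) [1..<Suc d] (f 0)"

definition pos :: "int \<Rightarrow> int" where "pos a = max a 0"

definition skew_symmetrizable :: "nat \<Rightarrow> (nat \<Rightarrow> nat \<Rightarrow> int) \<Rightarrow> bool" where
  "skew_symmetrizable n B \<longleftrightarrow>
     (\<exists>D :: nat \<Rightarrow> int. (\<forall>i<n. D i > 0) \<and>
        (\<forall>i<n. \<forall>j<n. D i * B i j = - (D j * B j i)))"

definition mutB :: "(nat \<Rightarrow> nat) \<Rightarrow> nat \<Rightarrow> (nat \<Rightarrow> nat \<Rightarrow> int) \<Rightarrow> (nat \<Rightarrow> nat \<Rightarrow> int)" where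
  "mutB d k B = (\<lambda>i j. if i = k \<or> j = k then - B i j
      else B i j + int (d k) * (pos (- B i k) * B k j + B i k * pos (B k j)))"

text \<open>(d,z)-mutation of y-variables, with the sign choice \<open>\<epsilon> = 1\<close>.\<close>
definition mutY :: "('p, 'm) semifield_ops_scheme \<Rightarrow> (nat \<Rightarrow> nat) \<Rightarrow> (nat \<Rightarrow> nat \<Rightarrow> 'p)
    \<Rightarrow> nat \<Rightarrow> (nat \<Rightarrow> nat \<Rightarrow> int) \<Rightarrow> (nat \<Rightarrow> 'p) \<Rightarrow> (nat \<Rightarrow> 'p)" where
  "mutY P d z k B y = (\<lambda>i. if i = k then sf_inv P (y k)
      else sf_mul P (y i)
        (sf_mul P (sf_pow P (y k) (int (d k) * pos (B k i)))
          (sf_pow P (sf_sum P (\<lambda>s. sf_mul P (z k s) (sf_pow P (y k) (int s))) (d k)) (- B k i))))"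

text \<open>Vertices of the n-regular tree \<open>\<T>\<^sub>n\<close>: reduced words in the labels
  (the unique path from the base vertex \<open>t\<^sub>0\<close>); labels are \<open>0..n-1\<close>.\<close>
definition tree_vertex :: "nat \<Rightarrow> nat list \<Rightarrow> bool" where
  "tree_vertex n ks \<longleftrightarrow> set ks \<subseteq> {..<n} \<and> (\<forall>i. Suc i < length ks \<longrightarrow> ks ! i \<noteq> ks ! Suc i)"

text \<open>The (B, y)-part of a (d,z)-cluster pattern: the seed at the vertex
  reached from \<open>t\<^sub>0\<close> along the path with labels \<open>k\<^sub>1, k\<^sub>2, ...\<close>.\<close>
fun ypat :: "('p, 'm) semifield_ops_scheme \<Rightarrow> (nat \<Rightarrow> nat) \<Rightarrow> (nat \<Rightarrow> nat \<Rightarrow> 'p)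
    \<Rightarrow> (nat \<Rightarrow> nat \<Rightarrow> int) \<Rightarrow> (nat \<Rightarrow> 'p) \<Rightarrow> nat list \<Rightarrow> (nat \<Rightarrow> nat \<Rightarrow> int) \<times> (nat \<Rightarrow> 'p)" where
  "ypat P d z B y [] = (B, y)"
| "ypat P d z B y (k # ks) = ypat P d z (mutB d k B) (mutY P d z k B y) ks"

datatype var = VX nat | VY nat | VZ nat nat

text \<open>The identification z_{i,s} = z_{i,d_i-s}: representative index.\<close>
definition zv :: "(nat \<Rightarrow> nat) \<Rightarrow> nat \<Rightarrow> nat \<Rightarrow> var" where
  "zv d i s = VZ i (min s (d i - s))"

definition yzvars :: "nat \<Rightarrow> (nat \<Rightarrow> nat) \<Rightarrow> var set" where
  "yzvars n d = {VY j | j. j < n} \<union> {VZ i s | i s. i < n \<and> 1 \<le> s \<and> s < d i}"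

text \<open>Trop(y,z): Laurent monomials as exponent vectors; \<oplus> = componentwise min.\<close>
definition trop_sf :: "(var \<Rightarrow> int) semifield_ops" where
  "trop_sf = \<lparr> sf_carrier = UNIV, sf_mul = (\<lambda>a b v. a v + b v), sf_one = (\<lambda>v. 0),
              sf_inv = (\<lambda>a v. - a v), sf_add = (\<lambda>a b v. min (a v) (b v)) \<rparr>"

definition zt :: "(nat \<Rightarrow> nat) \<Rightarrow> nat \<Rightarrow> nat \<Rightarrow> var \<Rightarrow> int" where
  "zt d i s = (\<lambda>v. if 1 \<le> s \<and> s < d i \<and> v = zv d i s then 1 else 0)"

definition yt0 :: "nat \<Rightarrow> var \<Rightarrow> int" where
  "yt0 j = (\<lambda>v. if v = VY j then 1 else 0)"

text \<open>Elements of the ambient field \<open>\<bbbQ>Trop(y,z)(x)\<close> are represented as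
  functions on points with positive real coordinates (evaluation is injective).\<close>
definition meval :: "nat \<Rightarrow> (nat \<Rightarrow> nat) \<Rightarrow> (var \<Rightarrow> int) \<Rightarrow> (var \<Rightarrow> real) \<Rightarrow> real" where
  "meval n d m p = (\<Prod>v\<in>yzvars n d. p v powi m v)"

definition mutX :: "nat \<Rightarrow> (nat \<Rightarrow> nat) \<Rightarrow> nat \<Rightarrow> (nat \<Rightarrow> nat \<Rightarrow> int) \<Rightarrow> (nat \<Rightarrow> var \<Rightarrow> int)
    \<Rightarrow> (nat \<Rightarrow> (var \<Rightarrow> real) \<Rightarrow> real) \<Rightarrow> (nat \<Rightarrow> (var \<Rightarrow> real) \<Rightarrow> real)" where
  "mutX n d k B y X = (\<lambda>i. if i \<noteq> k then X i else (\<lambda>p.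
      let yhat = meval n d (y k) p * (\<Prod>j<n. X j p powi B j k) in
      inverse (X k p) * (\<Prod>j<n. X j p ^ nat (pos (- B j k))) ^ d k
      * (\<Sum>s=0..d k. meval n d (zt d k s) p * yhat ^ s)
      / meval n d (sf_sum trop_sf (\<lambda>s. sf_mul trop_sf (zt d k s) (sf_pow trop_sf (y k) (int s))) (d k)) p))"

fun ppat :: "nat \<Rightarrow> (nat \<Rightarrow> nat) \<Rightarrow> (nat \<Rightarrow> nat \<Rightarrow> int) \<Rightarrow> (nat \<Rightarrow> var \<Rightarrow> int)
    \<Rightarrow> (nat \<Rightarrow> (var \<Rightarrow> real) \<Rightarrow> real) \<Rightarrow> nat list
    \<Rightarrow> (nat \<Rightarrow> nat \<Rightarrow> int) \<times> (nat \<Rightarrow> var \<Rightarrow> int) \<times> (nat \<Rightarrow> (var \<Rightarrow> real) \<Rightarrow> real)" where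
  "ppat n d B y X [] = (B, y, X)"
| "ppat n d B y X (k # ks) =
     ppat n d (mutB d k B) (mutY trop_sf d (zt d) k B y) (mutX n d k B y X) ks"

definition principal :: "nat \<Rightarrow> (nat \<Rightarrow> nat) \<Rightarrow> (nat \<Rightarrow> nat \<Rightarrow> int) \<Rightarrow> nat list
    \<Rightarrow> (nat \<Rightarrow> nat \<Rightarrow> int) \<times> (nat \<Rightarrow> var \<Rightarrow> int) \<times> (nat \<Rightarrow> (var \<Rightarrow> real) \<Rightarrow> real)" where
  "principal n d B ks = ppat n d B yt0 (\<lambda>j p. p (VX j)) ks"

text \<open>C-matrix: \<open>c\<^sup>t\<^sub>i\<^sub>j\<close> is the exponent of \<open>y\<^sub>i\<close> in \<open>y\<^sup>t\<^sub>j\<close>.\<close>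
definition Cmat :: "nat \<Rightarrow> (nat \<Rightarrow> nat) \<Rightarrow> (nat \<Rightarrow> nat \<Rightarrow> int) \<Rightarrow> nat list \<Rightarrow> nat \<Rightarrow> nat \<Rightarrow> int" where
  "Cmat n d B ks i j = fst (snd (principal n d B ks)) j (VY i)"

text \<open>F-polynomial: X-function with all x-variables set to 1.\<close>
definition Fpoly :: "nat \<Rightarrow> (nat \<Rightarrow> nat) \<Rightarrow> (nat \<Rightarrow> nat \<Rightarrow> int) \<Rightarrow> nat list \<Rightarrow> nat \<Rightarrow> (var \<Rightarrow> real) \<Rightarrow> real" where
  "Fpoly n d B ks j = (\<lambda>p. snd (snd (principal n d B ks)) j
                          (\<lambda>v. case v of VX _ \<Rightarrow> 1 | _ \<Rightarrow> p v))"

datatype 'v sfexp = SVar 'v | SAdd "'v sfexp" "'v sfexp" | SMul "'v sfexp" "'v sfexp"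
  | SDiv "'v sfexp" "'v sfexp"

fun sfvars :: "'v sfexp \<Rightarrow> 'v set" where
  "sfvars (SVar v) = {v}"
| "sfvars (SAdd a b) = sfvars a \<union> sfvars b"
| "sfvars (SMul a b) = sfvars a \<union> sfvars b"
| "sfvars (SDiv a b) = sfvars a \<union> sfvars b"

fun sfeval_real :: "'v sfexp \<Rightarrow> ('v \<Rightarrow> real) \<Rightarrow> real" where
  "sfeval_real (SVar v) p = p v"
| "sfeval_real (SAdd a b) p = sfeval_real a p + sfeval_real b p"
| "sfeval_real (SMul a b) p = sfeval_real a p * sfeval_real b p"
| "sfeval_real (SDiv a b) p = sfeval_real a p / sfeval_real b p"

fun sfeval :: "('p, 'm) semifield_ops_scheme \<Rightarrow> 'v sfexp \<Rightarrow> ('v \<Rightarrow> 'p) \<Rightarrow> 'p" where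
  "sfeval P (SVar v) a = a v"
| "sfeval P (SAdd e f) a = sf_add P (sfeval P e a) (sfeval P f a)"
| "sfeval P (SMul e f) a = sf_mul P (sfeval P e a) (sfeval P f a)"
| "sfeval P (SDiv e f) a = sf_mul P (sfeval P e a) (sf_inv P (sfeval P f a))"

definition positive_point :: "(var \<Rightarrow> real) \<Rightarrow> bool" where
  "positive_point p \<longleftrightarrow> (\<forall>v. 0 < p v)"

text \<open>\<open>F|\<^sub>P(a)\<close>: evaluate in P a subtraction-free rational expression (in the
  variables y, z) representing the rational function F.  By the universality of
  the semifield of subtraction-free rational functions, the value does not
  depend on the chosen expression.\<close>
definition eval_in :: "('p, 'm) semifield_ops_scheme \<Rightarrow> nat \<Rightarrow> (nat \<Rightarrow> nat)
    \<Rightarrow> ((var \<Rightarrow> real) \<Rightarrow> real) \<Rightarrow> (var \<Rightarrow> 'p) \<Rightarrow> 'p" where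
  "eval_in P n d F a = sfeval P (SOME e. sfvars e \<subseteq> yzvars n d \<and>
       (\<forall>p. positive_point p \<longrightarrow> sfeval_real e p = F p)) a"

section \<open>The universal semifield, modelled by pointwise operations on functions
  of positive real points\<close>

definition fun_sf :: "((var \<Rightarrow> real) \<Rightarrow> real) semifield_ops" where
  "fun_sf = \<lparr> sf_carrier = UNIV, sf_mul = (\<lambda>f g p. f p * g p), sf_one = (\<lambda>p. 1),
              sf_inv = (\<lambda>f p. inverse (f p)), sf_add = (\<lambda>f g p. f p + g p) \<rparr>"

text \<open>Y-functions: y-variables of the pattern in \<open>\<bbbQ>\<^sub>s\<^sub>f(y,z)\<close>.\<close>
definition Yfun :: "nat \<Rightarrow> (nat \<Rightarrow> nat) \<Rightarrow> (nat \<Rightarrow> nat \<Rightarrow> int) \<Rightarrow> nat list \<Rightarrow> nat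
    \<Rightarrow> (var \<Rightarrow> real) \<Rightarrow> real" where
  "Yfun n d B ks i = snd (ypat fun_sf d
      (\<lambda>k s p. if s = 0 \<or> s = d k then 1 else p (zv d k s)) B (\<lambda>j p. p (VY j)) ks) i"

end

theory Submission
  imports Defs "HOL-Computational_Algebra.Polynomial"
begin

text \<open>At a point with positive real coordinates, the quantities
  \<open>yhat\<^sup>t\<^sub>i = y\<^sup>t\<^sub>i \<Prod>\<^sub>j (x\<^sup>t\<^sub>j)^b\<^sup>t\<^sub>j\<^sub>i\<close> of the pattern with principal coefficients obey the
  \<open>y\<close>-mutation rule of the universal semifield; after taking logarithms this is linear
  algebra in the exchange matrix. Specialising \<open>x = 1\<close> gives the formula for the
  \<open>Y\<close>-functions. For an arbitrary semifield \<open>\<bbbP>\<close>, both sides of the formula are values of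
  subtraction-free expressions that agree as real functions on the positive orthant.
  Such an expression is a quotient of two sums of monomials, and two sums of monomials
  agreeing on the positive orthant have the same multiset of monomials; hence the two
  expressions also agree when evaluated in \<open>\<bbbP>\<close>.\<close>

locale semifield_struct =
  fixes P :: "('p, 'm) semifield_ops_scheme"
  assumes semifield: "semifield P"
begin

abbreviation carrier :: "'p set" where "carrier \<equiv> sf_carrier P"

lemma sf_one_closed [simp]: "sf_one P \<in> carrier"
  using semifield unfolding semifield_def by blast

lemma sf_mul_closed [simp]: "a \<in> carrier \<Longrightarrow> b \<in> carrier \<Longrightarrow> sf_mul P a b \<in> carrier"
  using semifield unfolding semifield_def by blast

lemma sf_inv_closed [simp]: "a \<in> carrier \<Longrightarrow> sf_inv P a \<in> carrier"
  using semifield unfolding semifield_def by blast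

lemma sf_add_closed [simp]: "a \<in> carrier \<Longrightarrow> b \<in> carrier \<Longrightarrow> sf_add P a b \<in> carrier"
  using semifield unfolding semifield_def by blast

lemma sf_mul_assoc:
  "a \<in> carrier \<Longrightarrow> b \<in> carrier \<Longrightarrow> c \<in> carrier \<Longrightarrow> sf_mul P (sf_mul P a b) c = sf_mul P a (sf_mul P b c)"
  using semifield unfolding semifield_def by blast

lemma sf_mul_comm: "a \<in> carrier \<Longrightarrow> b \<in> carrier \<Longrightarrow> sf_mul P a b = sf_mul P b a"
  using semifield unfolding semifield_def by blast

lemma sf_mul_one_left [simp]: "a \<in> carrier \<Longrightarrow> sf_mul P (sf_one P) a = a"
  using semifield unfolding semifield_def by blast

lemma sf_mul_one_right [simp]: "a \<in> carrier \<Longrightarrow> sf_mul P a (sf_one P) = a"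
  using sf_mul_comm sf_mul_one_left by simp

lemma sf_mul_inv_right [simp]: "a \<in> carrier \<Longrightarrow> sf_mul P a (sf_inv P a) = sf_one P"
  using semifield unfolding semifield_def by blast

lemma sf_mul_inv_left [simp]: "a \<in> carrier \<Longrightarrow> sf_mul P (sf_inv P a) a = sf_one P"
  using sf_mul_comm sf_mul_inv_right by simp

lemma sf_add_assoc:
  "a \<in> carrier \<Longrightarrow> b \<in> carrier \<Longrightarrow> c \<in> carrier \<Longrightarrow> sf_add P (sf_add P a b) c = sf_add P a (sf_add P b c)"
  using semifield unfolding semifield_def by blast

lemma sf_add_comm: "a \<in> carrier \<Longrightarrow> b \<in> carrier \<Longrightarrow> sf_add P a b = sf_add P b a"
  using semifield unfolding semifield_def by blast

lemma sf_distrib_left: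
  "a \<in> carrier \<Longrightarrow> b \<in> carrier \<Longrightarrow> c \<in> carrier \<Longrightarrow>
    sf_mul P a (sf_add P b c) = sf_add P (sf_mul P a b) (sf_mul P a c)"
  using semifield unfolding semifield_def by blast

lemma sf_distrib_right:
  "a \<in> carrier \<Longrightarrow> b \<in> carrier \<Longrightarrow> c \<in> carrier \<Longrightarrow>
    sf_mul P (sf_add P b c) a = sf_add P (sf_mul P b a) (sf_mul P c a)"
  using sf_distrib_left sf_mul_comm by simp

lemma sf_mul_left_commute:
  "a \<in> carrier \<Longrightarrow> b \<in> carrier \<Longrightarrow> c \<in> carrier \<Longrightarrow> sf_mul P a (sf_mul P b c) = sf_mul P b (sf_mul P a c)"
  by (metis sf_mul_assoc sf_mul_comm)

lemma sf_add_left_commute: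
  "a \<in> carrier \<Longrightarrow> b \<in> carrier \<Longrightarrow> c \<in> carrier \<Longrightarrow> sf_add P a (sf_add P b c) = sf_add P b (sf_add P a c)"
  by (metis sf_add_assoc sf_add_comm)

lemma sf_mul_mul_swap:
  "a \<in> carrier \<Longrightarrow> b \<in> carrier \<Longrightarrow> c \<in> carrier \<Longrightarrow> e \<in> carrier \<Longrightarrow>
    sf_mul P (sf_mul P a b) (sf_mul P c e) = sf_mul P (sf_mul P a c) (sf_mul P b e)"
  by (simp add: sf_mul_assoc sf_mul_left_commute[of b c])

lemma sf_mul_inv_cancel_left: "a \<in> carrier \<Longrightarrow> b \<in> carrier \<Longrightarrow> sf_mul P (sf_inv P a) (sf_mul P a b) = b"
  by (metis sf_inv_closed sf_mul_assoc sf_mul_inv_left sf_mul_one_left)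

lemma sf_inv_unique: "a \<in> carrier \<Longrightarrow> b \<in> carrier \<Longrightarrow> sf_mul P a b = sf_one P \<Longrightarrow> b = sf_inv P a"
  by (metis sf_inv_closed sf_mul_inv_cancel_left sf_mul_one_right)

lemma sf_inv_mul:
  assumes "a \<in> carrier" "b \<in> carrier"
  shows "sf_inv P (sf_mul P a b) = sf_mul P (sf_inv P a) (sf_inv P b)"
proof -
  have "sf_mul P (sf_mul P a b) (sf_mul P (sf_inv P a) (sf_inv P b)) =
      sf_mul P (sf_mul P a (sf_inv P a)) (sf_mul P b (sf_inv P b))"
    using assms by (intro sf_mul_mul_swap) auto
  then show ?thesis using assms by (intro sf_inv_unique[symmetric]) auto
qed

lemma sf_inv_inv: "a \<in> carrier \<Longrightarrow> sf_inv P (sf_inv P a) = a"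
  by (rule sf_inv_unique[symmetric]) auto

lemma sf_inv_one [simp]: "sf_inv P (sf_one P) = sf_one P"
  by (rule sf_inv_unique[symmetric]) auto

lemma sf_frac_eq_if_cross_eq:
  assumes c: "a \<in> carrier" "b \<in> carrier" "c \<in> carrier" "e \<in> carrier"
    and eq: "sf_mul P a e = sf_mul P c b"
  shows "sf_mul P a (sf_inv P b) = sf_mul P c (sf_inv P e)"
proof -
  have "sf_mul P e (sf_mul P (sf_inv P e) (sf_inv P b)) = sf_inv P b"
    using c by (simp add: sf_mul_assoc[symmetric])
  then have "sf_mul P a (sf_inv P b) = sf_mul P (sf_mul P a e) (sf_mul P (sf_inv P e) (sf_inv P b))"
    using c by (simp add: sf_mul_assoc)
  also have "\<dots> = sf_mul P (sf_mul P c b) (sf_mul P (sf_inv P e) (sf_inv P b))" using eq by simp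
  also have "\<dots> = sf_mul P c (sf_inv P e)" using c by (simp add: sf_mul_assoc sf_mul_left_commute[of b])
  finally show ?thesis .
qed

lemma sf_frac_add:
  assumes c: "a \<in> carrier" "b \<in> carrier" "c \<in> carrier" "e \<in> carrier"
  shows "sf_add P (sf_mul P a (sf_inv P b)) (sf_mul P c (sf_inv P e)) =
    sf_mul P (sf_add P (sf_mul P a e) (sf_mul P c b)) (sf_inv P (sf_mul P b e))"
proof -
  have "sf_mul P (sf_mul P a e) (sf_mul P (sf_inv P b) (sf_inv P e)) =
      sf_mul P (sf_mul P a (sf_inv P b)) (sf_mul P e (sf_inv P e))"
    using c by (intro sf_mul_mul_swap) auto
  then have 1: "sf_mul P (sf_mul P a e) (sf_mul P (sf_inv P b) (sf_inv P e)) = sf_mul P a (sf_inv P b)"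
    using c by simp
  have "sf_mul P (sf_mul P c b) (sf_mul P (sf_inv P e) (sf_inv P b)) =
      sf_mul P (sf_mul P c (sf_inv P e)) (sf_mul P b (sf_inv P b))"
    using c by (intro sf_mul_mul_swap) auto
  then have 2: "sf_mul P (sf_mul P c b) (sf_mul P (sf_inv P b) (sf_inv P e)) = sf_mul P c (sf_inv P e)"
    using c by (simp add: sf_mul_comm[of "sf_inv P b"])
  show ?thesis using c by (simp add: sf_inv_mul sf_distrib_right 1 2)
qed

lemma sf_frac_mul:
  "a \<in> carrier \<Longrightarrow> b \<in> carrier \<Longrightarrow> c \<in> carrier \<Longrightarrow> e \<in> carrier \<Longrightarrow>
    sf_mul P (sf_mul P a (sf_inv P b)) (sf_mul P c (sf_inv P e)) =
    sf_mul P (sf_mul P a c) (sf_inv P (sf_mul P b e))"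
  by (simp add: sf_inv_mul sf_mul_mul_swap)

lemma sf_frac_div:
  "a \<in> carrier \<Longrightarrow> b \<in> carrier \<Longrightarrow> c \<in> carrier \<Longrightarrow> e \<in> carrier \<Longrightarrow>
    sf_mul P (sf_mul P a (sf_inv P b)) (sf_inv P (sf_mul P c (sf_inv P e))) =
    sf_mul P (sf_mul P a e) (sf_inv P (sf_mul P b c))"
  by (simp add: sf_inv_mul sf_inv_inv sf_mul_mul_swap sf_mul_comm[of "sf_inv P c"])

end

definition sf_hom_on :: "('a, 'm1) semifield_ops_scheme \<Rightarrow> ('b, 'm2) semifield_ops_scheme
    \<Rightarrow> ('a \<Rightarrow> 'b) \<Rightarrow> 'a set \<Rightarrow> bool" where
  "sf_hom_on S T h G \<longleftrightarrow> sf_one S \<in> G \<and> h (sf_one S) = sf_one T \<and>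
     (\<forall>x\<in>G. \<forall>y\<in>G. sf_mul S x y \<in> G \<and> sf_add S x y \<in> G \<and>
        h (sf_mul S x y) = sf_mul T (h x) (h y) \<and> h (sf_add S x y) = sf_add T (h x) (h y)) \<and>
     (\<forall>x\<in>G. sf_inv S x \<in> G \<and> h (sf_inv S x) = sf_inv T (h x))"

lemma sf_hom_onD:
  assumes "sf_hom_on S T h G"
  shows "sf_one S \<in> G" "h (sf_one S) = sf_one T"
    "x \<in> G \<Longrightarrow> y \<in> G \<Longrightarrow> sf_mul S x y \<in> G" "x \<in> G \<Longrightarrow> y \<in> G \<Longrightarrow> sf_add S x y \<in> G"
    "x \<in> G \<Longrightarrow> y \<in> G \<Longrightarrow> h (sf_mul S x y) = sf_mul T (h x) (h y)"
    "x \<in> G \<Longrightarrow> y \<in> G \<Longrightarrow> h (sf_add S x y) = sf_add T (h x) (h y)"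
    "x \<in> G \<Longrightarrow> sf_inv S x \<in> G" "x \<in> G \<Longrightarrow> h (sf_inv S x) = sf_inv T (h x)"
  using assms unfolding sf_hom_on_def by blast+

lemma sf_hom_on_funpow:
  assumes "sf_hom_on S T h G" "x \<in> G" "a \<in> G"
  shows "(sf_mul S x ^^ m) a \<in> G \<and> h ((sf_mul S x ^^ m) a) = (sf_mul T (h x) ^^ m) (h a)"
  by (induction m) (auto simp: sf_hom_onD[OF assms(1)] assms)

lemma sf_hom_on_pow:
  assumes "sf_hom_on S T h G" "x \<in> G"
  shows "sf_pow S x k \<in> G \<and> h (sf_pow S x k) = sf_pow T (h x) k"
  using sf_hom_on_funpow[OF assms(1) assms(2) sf_hom_onD(1)[OF assms(1)]]
    sf_hom_on_funpow[OF assms(1) sf_hom_onD(7)[OF assms] sf_hom_onD(1)[OF assms(1)]]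
  by (auto simp: sf_pow_def sf_hom_onD[OF assms(1)] assms)

lemma sf_hom_on_foldr_mul:
  assumes "sf_hom_on S T h G" "\<forall>j\<in>set xs. f j \<in> G" "a \<in> G"
  shows "foldr (\<lambda>j acc. sf_mul S (f j) acc) xs a \<in> G \<and>
    h (foldr (\<lambda>j acc. sf_mul S (f j) acc) xs a) = foldr (\<lambda>j acc. sf_mul T (h (f j)) acc) xs (h a)"
  using assms(2) by (induction xs) (auto simp: sf_hom_onD[OF assms(1)] assms)

lemma sf_hom_on_foldr_add:
  assumes "sf_hom_on S T h G" "\<forall>j\<in>set xs. f j \<in> G" "a \<in> G"
  shows "foldr (\<lambda>j acc. sf_add S (f j) acc) xs a \<in> G \<and>
    h (foldr (\<lambda>j acc. sf_add S (f j) acc) xs a) = foldr (\<lambda>j acc. sf_add T (h (f j)) acc) xs (h a)"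
  using assms(2) by (induction xs) (auto simp: sf_hom_onD[OF assms(1)] assms)

lemma sf_hom_on_prod:
  assumes "sf_hom_on S T h G" "\<forall>j<n. f j \<in> G"
  shows "sf_prod S f n \<in> G \<and> h (sf_prod S f n) = sf_prod T (\<lambda>j. h (f j)) n"
  using sf_hom_on_foldr_mul[OF assms(1), of "[0..<n]" f "sf_one S"] assms
  by (auto simp: sf_prod_def sf_hom_onD[OF assms(1)])

lemma sf_hom_on_sum:
  assumes "sf_hom_on S T h G" "\<forall>j\<le>m. f j \<in> G"
  shows "sf_sum S f m \<in> G \<and> h (sf_sum S f m) = sf_sum T (\<lambda>j. h (f j)) m"
  using sf_hom_on_foldr_add[OF assms(1), of "[1..<Suc m]" f "f 0"] assms
  by (auto simp: sf_sum_def)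

lemma sf_sum_cong: "(\<And>j. j \<le> m \<Longrightarrow> f j = g j) \<Longrightarrow> sf_sum T f m = sf_sum T g m"
  unfolding sf_sum_def by (rule foldr_cong) auto

lemma sf_prod_cong: "(\<And>j. j < n \<Longrightarrow> f j = g j) \<Longrightarrow> sf_prod T f n = sf_prod T g n"
  unfolding sf_prod_def by (rule foldr_cong) auto

lemma sf_hom_on_prod_pow:
  assumes h: "sf_hom_on S T h G" and f: "\<forall>j<n. f j \<in> G"
  shows "sf_prod S (\<lambda>j. sf_pow S (f j) (k j)) n \<in> G \<and>
    h (sf_prod S (\<lambda>j. sf_pow S (f j) (k j)) n) = sf_prod T (\<lambda>j. sf_pow T (h (f j)) (k j)) n"
  using sf_hom_on_prod[OF h, of n "\<lambda>j. sf_pow S (f j) (k j)"] sf_hom_on_pow[OF h] f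
  by (auto intro: sf_prod_cong)

lemma sf_hom_on_mutY:
  assumes h: "sf_hom_on S T h G" and "k < n" "i < n"
    and z: "\<forall>s\<le>d k. z k s \<in> G \<and> h (z k s) = z' k s"
    and y: "\<forall>i<n. y i \<in> G \<and> h (y i) = y' i"
  shows "mutY S d z k B y i \<in> G \<and> h (mutY S d z k B y i) = mutY T d z' k B y' i"
proof -
  have yk: "y k \<in> G" "h (y k) = y' k" and yi: "y i \<in> G" "h (y i) = y' i" using y assms by auto
  have "\<forall>s\<le>d k. sf_mul S (z k s) (sf_pow S (y k) (int s)) \<in> G \<and>
      h (sf_mul S (z k s) (sf_pow S (y k) (int s))) = sf_mul T (z' k s) (sf_pow T (y' k) (int s))"
    using z sf_hom_on_pow[OF h yk(1)] yk by (auto simp: sf_hom_onD[OF h])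
  then have sm: "sf_sum S (\<lambda>s. sf_mul S (z k s) (sf_pow S (y k) (int s))) (d k) \<in> G \<and>
     h (sf_sum S (\<lambda>s. sf_mul S (z k s) (sf_pow S (y k) (int s))) (d k)) =
     sf_sum T (\<lambda>s. sf_mul T (z' k s) (sf_pow T (y' k) (int s))) (d k)"
    using sf_hom_on_sum[OF h, of "d k" "\<lambda>s. sf_mul S (z k s) (sf_pow S (y k) (int s))"]
    by (auto intro: sf_sum_cong)
  show ?thesis
    using sm sf_hom_on_pow[OF h yk(1)] sf_hom_on_pow[OF h sm[THEN conjunct1]] yi yk
    by (auto simp: mutY_def sf_hom_onD[OF h])
qed

lemma sf_hom_on_ypat:
  assumes h: "sf_hom_on S T h G" and "set ks \<subseteq> {..<n}"
    and "\<forall>k<n. \<forall>s\<le>d k. z k s \<in> G \<and> h (z k s) = z' k s"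
    and "\<forall>i<n. y i \<in> G \<and> h (y i) = y' i"
  shows "\<forall>i<n. snd (ypat S d z B y ks) i \<in> G \<and> h (snd (ypat S d z B y ks) i) = snd (ypat T d z' B y' ks) i"
  using assms(2-)
proof (induction ks arbitrary: B y y')
  case Nil then show ?case by simp
next
  case (Cons k ks)
  have "\<forall>i<n. mutY S d z k B y i \<in> G \<and> h (mutY S d z k B y i) = mutY T d z' k B y' i"
    using sf_hom_on_mutY[OF h, of k n _ d z z' y y' B] Cons.prems by auto
  then show ?case using Cons.IH[of "mutY S d z k B y" "mutY T d z' k B y'" "mutB d k B"] Cons.prems by simp
qed

lemma fst_ypat: "fst (ypat S d z B y ks) = fold (mutB d) ks B"
  by (induction ks arbitrary: B y) auto

section \<open>Sums of monomials agreeing on the positive orthant\<close>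

lemma coeffs_eq_0_if_sum_powers_vanish:
  fixes g :: "nat \<Rightarrow> real"
  assumes K: "finite K" and vanish: "\<forall>t>0. (\<Sum>k\<in>K. g k * t ^ k) = 0"
  shows "\<forall>k\<in>K. g k = 0"
proof -
  define q where "q = (\<Sum>k\<in>K. monom (g k) k)"
  have poly_q: "poly q t = (\<Sum>k\<in>K. g k * t ^ k)" for t
    by (simp add: q_def poly_sum poly_monom)
  have "q = 0"
  proof (rule ccontr)
    assume "q \<noteq> 0"
    then have "finite {t. poly q t = 0}" by (rule poly_roots_finite)
    moreover have "{0<..(1::real)} \<subseteq> {t. poly q t = 0}" using vanish poly_q by (simp add: subset_eq)
    ultimately have "finite {0<..(1::real)}" by (rule finite_subset[rotated])
    then show False using infinite_Ioc[of "0::real" 1] by simp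
  qed
  show ?thesis
  proof
    fix k assume k: "k \<in> K"
    have "coeff q k = (\<Sum>j\<in>K. if j = k then g j else 0)" by (simp add: q_def coeff_sum coeff_monom)
    also have "\<dots> = g k" using K k by simp
    finally show "g k = 0" using \<open>q = 0\<close> by simp
  qed
qed

definition mono_val :: "'v set \<Rightarrow> ('v \<Rightarrow> real) \<Rightarrow> ('v \<Rightarrow> nat) \<Rightarrow> real" where
  "mono_val V p m = (\<Prod>v\<in>V. p v ^ m v)"

lemma mono_val_pos: "\<forall>v. 0 < p v \<Longrightarrow> 0 < mono_val V p m"
  unfolding mono_val_def by (rule prod_pos) auto

lemma mono_val_add: "mono_val V p (\<lambda>w. x w + y w) = mono_val V p x * mono_val V p y"
  by (simp add: mono_val_def power_add prod.distrib)

lemma mono_val_upd: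
  assumes "v \<notin> V"
  shows "mono_val V (p(v := t)) m = mono_val V p m" "mono_val V p (m(v := k)) = mono_val V p m"
  unfolding mono_val_def using assms by (auto intro: prod.cong)

text \<open>Grouping by the exponent of \<open>v\<close> gives a polynomial in \<open>p v\<close> vanishing for \<open>p v > 0\<close>.\<close>
lemma sum_monomials_slice_vanish:
  assumes V: "finite V" "v \<notin> V" and S: "finite S"
    and vanish: "\<forall>p. (\<forall>w. 0 < p w) \<longrightarrow> (\<Sum>m\<in>S. c m * mono_val (insert v V) p m) = 0"
    and p: "\<forall>w. 0 < p w"
  shows "(\<Sum>m\<in>{m\<in>S. m v = k}. c m * mono_val V p m) = 0"
proof -
  define K where "K = (\<lambda>m. m v) ` S"
  define g where "g k q = (\<Sum>m\<in>{m\<in>S. m v = k}. c m * mono_val V q m)" for k q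
  have split: "(\<Sum>m\<in>S. c m * mono_val (insert v V) q m) = (\<Sum>k\<in>K. g k q * q v ^ k)" for q
  proof -
    have "(\<Sum>m\<in>S. c m * mono_val (insert v V) q m) =
        (\<Sum>k\<in>K. \<Sum>m\<in>{m\<in>S. m v = k}. c m * mono_val (insert v V) q m)"
      unfolding K_def using S by (rule sum.image_gen)
    also have "\<dots> = (\<Sum>k\<in>K. g k q * q v ^ k)"
      unfolding g_def sum_distrib_right using V
      by (intro sum.cong[OF refl]) (auto simp: mono_val_def)
    finally show ?thesis .
  qed
  have "\<forall>t>0. (\<Sum>k\<in>K. g k p * t ^ k) = 0"
  proof (intro allI impI)
    fix t :: real assume "t > 0"
    then have "(\<Sum>m\<in>S. c m * mono_val (insert v V) (p(v := t)) m) = 0" using p vanish by simp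
    then show "(\<Sum>k\<in>K. g k p * t ^ k) = 0" by (simp add: split g_def mono_val_upd[OF V(2)])
  qed
  then have "\<forall>k\<in>K. g k p = 0" using S by (intro coeffs_eq_0_if_sum_powers_vanish) (auto simp: K_def)
  then show ?thesis
  proof (cases "k \<in> K")
    case False
    then have "{m\<in>S. m v = k} = {}" by (auto simp: K_def)
    then show ?thesis by (simp only: sum.empty)
  qed (simp add: g_def)
qed

text \<open>Induction on the variables, applying the hypothesis to each slice \<open>m v = k\<close>.\<close>
lemma coeffs_eq_0_if_sum_monomials_vanish:
  assumes "finite V" "finite S" and supp: "\<forall>m\<in>S. \<forall>w. w \<notin> V \<longrightarrow> m w = 0"
    and vanish: "\<forall>p. (\<forall>v. 0 < p v) \<longrightarrow> (\<Sum>m\<in>S. c m * mono_val V p m) = 0"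
  shows "\<forall>m\<in>S. c m = 0"
  using assms
proof (induction V arbitrary: S c rule: finite_induct)
  case empty
  have S: "S \<subseteq> {\<lambda>_. 0}" using empty.prems(2) by auto
  have "(\<Sum>m\<in>S. c m) = 0" using empty.prems(3)[rule_format, of "\<lambda>_. 1"] by (simp add: mono_val_def)
  show ?case
  proof
    fix m assume "m \<in> S"
    then have "S = {m}" using S by auto
    then show "c m = 0" using \<open>(\<Sum>m\<in>S. c m) = 0\<close> by simp
  qed
next
  case (insert v V)
  note fS = insert.prems(1) and supp = insert.prems(2) and vanish = insert.prems(3)
  show ?case
  proof
    fix m0 assume m0: "m0 \<in> S"
    define Sk where "Sk = {m\<in>S. m v = m0 v}"
    have inj: "inj_on (\<lambda>m. m(v := 0)) Sk"
    proof (rule inj_onI)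
      fix x y assume "x \<in> Sk" "y \<in> Sk" "x(v := 0) = y(v := 0)"
      then show "x = y" unfolding Sk_def by (metis (mono_tags, lifting) fun_upd_triv fun_upd_upd mem_Collect_eq)
    qed
    have "\<forall>m'\<in>(\<lambda>m. m(v := 0)) ` Sk. c (m'(v := m0 v)) = 0"
    proof (rule insert.IH)
      show "finite ((\<lambda>m. m(v := 0)) ` Sk)" using fS by (simp add: Sk_def)
      show "\<forall>m\<in>(\<lambda>m. m(v := 0)) ` Sk. \<forall>w. w \<notin> V \<longrightarrow> m w = 0" using supp by (auto simp: Sk_def)
      show "\<forall>p. (\<forall>v. 0 < p v) \<longrightarrow> (\<Sum>m\<in>(\<lambda>m. m(v := 0)) ` Sk. c (m(v := m0 v)) * mono_val V p m) = 0"
      proof (intro allI impI)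
        fix p :: "'a \<Rightarrow> real" assume p: "\<forall>v. 0 < p v"
        have "(\<Sum>m\<in>(\<lambda>m. m(v := 0)) ` Sk. c (m(v := m0 v)) * mono_val V p m) = (\<Sum>m\<in>Sk. c m * mono_val V p m)"
          unfolding sum.reindex[OF inj] comp_def
          by (rule sum.cong[OF refl]) (auto simp: Sk_def mono_val_upd(2)[OF insert.hyps(2)] fun_upd_idem)
        also have "\<dots> = 0"
          unfolding Sk_def by (rule sum_monomials_slice_vanish[OF insert.hyps(1,2) fS vanish p])
        finally show "(\<Sum>m\<in>(\<lambda>m. m(v := 0)) ` Sk. c (m(v := m0 v)) * mono_val V p m) = 0" .
      qed
    qed
    moreover have "m0(v := 0) \<in> (\<lambda>m. m(v := 0)) ` Sk" using m0 by (auto simp: Sk_def)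
    ultimately have "c ((m0(v := 0))(v := m0 v)) = 0" by blast
    then show "c m0 = 0" by simp
  qed
qed

lemma sum_list_eq_sum_count_list:
  fixes f :: "'a \<Rightarrow> real"
  assumes "finite S" "set xs \<subseteq> S"
  shows "sum_list (map f xs) = (\<Sum>x\<in>S. real (count_list xs x) * f x)"
  using assms(2)
proof (induction xs)
  case Nil then show ?case by simp
next
  case (Cons x xs)
  have "f x = (\<Sum>y\<in>S. (if x = y then 1 else 0) * f y)"
    using Cons.prems assms(1) by (simp add: if_distrib[of "\<lambda>c. c * _"] cong: if_cong)
  then show ?case using Cons
    by (simp add: sum.distrib[symmetric] algebra_simps) (rule sum.cong, auto simp: algebra_simps)
qed

definition posy_val :: "'v set \<Rightarrow> ('v \<Rightarrow> real) \<Rightarrow> ('v \<Rightarrow> nat) list \<Rightarrow> real" where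
  "posy_val V p ms = sum_list (map (mono_val V p) ms)"

lemma posy_val_append: "posy_val V p (xs @ ys) = posy_val V p xs + posy_val V p ys"
  by (simp add: posy_val_def)

lemma posy_val_pos: "\<forall>v. 0 < p v \<Longrightarrow> xs \<noteq> [] \<Longrightarrow> 0 < posy_val V p xs"
proof (induction xs)
  case (Cons x xs)
  then show ?case using mono_val_pos[of p V x]
    by (cases "xs = []") (auto simp: posy_val_def intro!: add_pos_pos)
qed simp

lemma mset_eq_if_posy_val_eq:
  assumes "finite V" and supp: "\<forall>m\<in>set xs \<union> set ys. \<forall>w. w \<notin> V \<longrightarrow> m w = 0"
    and eq: "\<forall>p. (\<forall>v. 0 < p v) \<longrightarrow> posy_val V p xs = posy_val V p ys"
  shows "mset xs = mset ys"
proof -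
  define S where "S = set xs \<union> set ys"
  have posy_val_S: "posy_val V p zs = (\<Sum>m\<in>S. real (count_list zs m) * mono_val V p m)"
    if "set zs \<subseteq> S" for zs p
    unfolding posy_val_def by (rule sum_list_eq_sum_count_list) (use that in \<open>auto simp: S_def\<close>)
  have "\<forall>m\<in>S. real (count_list xs m) - real (count_list ys m) = 0"
  proof (rule coeffs_eq_0_if_sum_monomials_vanish[OF assms(1)])
    show "finite S" "\<forall>m\<in>S. \<forall>w. w \<notin> V \<longrightarrow> m w = 0" using supp by (auto simp: S_def)
    show "\<forall>p. (\<forall>v. 0 < p v) \<longrightarrow>
        (\<Sum>m\<in>S. (real (count_list xs m) - real (count_list ys m)) * mono_val V p m) = 0"
      using eq posy_val_S[of xs] posy_val_S[of ys]
      by (auto simp: S_def left_diff_distrib sum_subtractf)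
  qed
  then have "count_list xs m = count_list ys m" for m
    by (cases "m \<in> S") (auto simp: S_def count_list_0_iff)
  then show ?thesis by (intro multiset_eqI) (simp add: count_mset)
qed

section \<open>Universality of subtraction-free expressions\<close>

definition mono_var :: "'v \<Rightarrow> 'v \<Rightarrow> nat" where
  "mono_var v = (\<lambda>w. if w = v then 1 else 0)"

definition mono_list_mul :: "('v \<Rightarrow> nat) list \<Rightarrow> ('v \<Rightarrow> nat) list \<Rightarrow> ('v \<Rightarrow> nat) list" where
  "mono_list_mul xs ys = concat (map (\<lambda>x. map (\<lambda>y w. x w + y w) ys) xs)"

text \<open>Numerator and denominator of a subtraction-free expression, as sums of monomials.\<close>
fun sfexp_frac :: "'v sfexp \<Rightarrow> ('v \<Rightarrow> nat) list \<times> ('v \<Rightarrow> nat) list" where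
  "sfexp_frac (SVar v) = ([mono_var v], [\<lambda>_. 0])"
| "sfexp_frac (SAdd a b) =
    (mono_list_mul (fst (sfexp_frac a)) (snd (sfexp_frac b)) @ mono_list_mul (fst (sfexp_frac b)) (snd (sfexp_frac a)),
     mono_list_mul (snd (sfexp_frac a)) (snd (sfexp_frac b)))"
| "sfexp_frac (SMul a b) =
    (mono_list_mul (fst (sfexp_frac a)) (fst (sfexp_frac b)), mono_list_mul (snd (sfexp_frac a)) (snd (sfexp_frac b)))"
| "sfexp_frac (SDiv a b) =
    (mono_list_mul (fst (sfexp_frac a)) (snd (sfexp_frac b)), mono_list_mul (snd (sfexp_frac a)) (fst (sfexp_frac b)))"

lemma mono_list_mul_Cons: "mono_list_mul (x # xs) ys = map (\<lambda>y w. x w + y w) ys @ mono_list_mul xs ys"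
  by (simp add: mono_list_mul_def)

lemma mono_list_mul_Nil [simp]: "mono_list_mul [] ys = []"
  by (simp add: mono_list_mul_def)

lemma mono_list_mul_nonempty: "xs \<noteq> [] \<Longrightarrow> ys \<noteq> [] \<Longrightarrow> mono_list_mul xs ys \<noteq> []"
  by (cases xs) (auto simp: mono_list_mul_Cons)

lemma set_mono_list_mul: "set (mono_list_mul xs ys) = {(\<lambda>w. x w + y w) | x y. x \<in> set xs \<and> y \<in> set ys}"
  by (auto simp: mono_list_mul_def)

lemma sfexp_frac_nonempty: "fst (sfexp_frac e) \<noteq> [] \<and> snd (sfexp_frac e) \<noteq> []"
  by (induction e) (auto simp: mono_list_mul_nonempty)

lemma sfexp_frac_supp:
  "sfvars e \<subseteq> V \<Longrightarrow> \<forall>m\<in>set (fst (sfexp_frac e)) \<union> set (snd (sfexp_frac e)). \<forall>w. w \<notin> V \<longrightarrow> m w = 0"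
  by (induction e) (auto simp: set_mono_list_mul mono_var_def)

lemma posy_val_mono_list_mul: "posy_val V p (mono_list_mul xs ys) = posy_val V p xs * posy_val V p ys"
  by (induction xs) (auto simp: mono_list_mul_Cons posy_val_append mono_val_add posy_val_def
      sum_list_const_mult distrib_right comp_def)

lemma mono_val_mono_var:
  assumes "finite V" "v \<in> V"
  shows "mono_val V p (mono_var v) = p v"
proof -
  have "mono_val V p (mono_var v) = (\<Prod>w\<in>V. if w = v then p w else 1)"
    unfolding mono_val_def mono_var_def by (rule prod.cong) auto
  then show ?thesis using assms by simp
qed

lemma sfeval_real_sfexp_frac:
  assumes "finite V" "\<forall>v. 0 < p v" "sfvars e \<subseteq> V"
  shows "sfeval_real e p = posy_val V p (fst (sfexp_frac e)) / posy_val V p (snd (sfexp_frac e))"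
  using assms(3)
proof (induction e)
  case (SVar v)
  then show ?case using assms(1) by (simp add: posy_val_def mono_val_mono_var) (simp add: mono_val_def)
next
  case (SAdd a b)
  have "0 < posy_val V p (snd (sfexp_frac a))" "0 < posy_val V p (snd (sfexp_frac b))"
    using posy_val_pos assms(2) sfexp_frac_nonempty by blast+
  then show ?case using SAdd by (simp add: posy_val_append posy_val_mono_list_mul field_simps)
next
  case (SMul a b)
  then show ?case by (simp add: posy_val_mono_list_mul)
next
  case (SDiv a b)
  then show ?case by (simp add: posy_val_mono_list_mul)
qed

fun sf_list_sum :: "('p, 'm) semifield_ops_scheme \<Rightarrow> 'p list \<Rightarrow> 'p" where
  "sf_list_sum P [] = sf_one P"
| "sf_list_sum P [x] = x"
| "sf_list_sum P (x # y # ys) = sf_add P x (sf_list_sum P (y # ys))"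

lemma sf_list_sum_Cons: "xs \<noteq> [] \<Longrightarrow> sf_list_sum P (x # xs) = sf_add P x (sf_list_sum P xs)"
  by (cases xs) auto

context semifield_struct
begin

definition sf_npow :: "'p \<Rightarrow> nat \<Rightarrow> 'p" where
  "sf_npow x m = (sf_mul P x ^^ m) (sf_one P)"

lemma sf_npow_closed [simp]: "x \<in> carrier \<Longrightarrow> sf_npow x m \<in> carrier"
  unfolding sf_npow_def by (induction m) auto

lemma sf_npow_add: "x \<in> carrier \<Longrightarrow> sf_npow x (m1 + m2) = sf_mul P (sf_npow x m1) (sf_npow x m2)"
  unfolding sf_npow_def by (induction m1) (auto simp: sf_mul_assoc sf_npow_def[symmetric])

lemma sf_npow_0 [simp]: "sf_npow x 0 = sf_one P"
  by (simp add: sf_npow_def)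

lemma sf_npow_1 [simp]: "x \<in> carrier \<Longrightarrow> sf_npow x (Suc 0) = x"
  by (simp add: sf_npow_def)

definition sf_mono :: "'v list \<Rightarrow> ('v \<Rightarrow> 'p) \<Rightarrow> ('v \<Rightarrow> nat) \<Rightarrow> 'p" where
  "sf_mono vs a m = foldr (\<lambda>v acc. sf_mul P (sf_npow (a v) (m v)) acc) vs (sf_one P)"

lemma sf_mono_closed [simp]: "\<forall>v\<in>set vs. a v \<in> carrier \<Longrightarrow> sf_mono vs a m \<in> carrier"
  unfolding sf_mono_def by (induction vs) auto

lemma sf_mono_add:
  "\<forall>v\<in>set vs. a v \<in> carrier \<Longrightarrow>
    sf_mono vs a (\<lambda>w. m1 w + m2 w) = sf_mul P (sf_mono vs a m1) (sf_mono vs a m2)"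
proof (induction vs)
  case Nil then show ?case by (simp add: sf_mono_def)
next
  case (Cons v vs)
  then have c: "a v \<in> carrier" "\<forall>v\<in>set vs. a v \<in> carrier" by auto
  have "sf_mono (v # vs) a (\<lambda>w. m1 w + m2 w) =
      sf_mul P (sf_mul P (sf_npow (a v) (m1 v)) (sf_npow (a v) (m2 v))) (sf_mul P (sf_mono vs a m1) (sf_mono vs a m2))"
    using Cons c by (simp add: sf_mono_def sf_npow_add)
  also have "\<dots> = sf_mul P (sf_mul P (sf_npow (a v) (m1 v)) (sf_mono vs a m1)) (sf_mul P (sf_npow (a v) (m2 v)) (sf_mono vs a m2))"
    using c by (simp add: sf_mul_mul_swap)
  finally show ?case by (simp add: sf_mono_def)
qed

lemma sf_mono_zero: "sf_mono vs a (\<lambda>_. 0) = sf_one P"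
  unfolding sf_mono_def by (induction vs) auto

lemma sf_mono_mono_var:
  "distinct vs \<Longrightarrow> \<forall>v\<in>set vs. a v \<in> carrier \<Longrightarrow> v \<in> set vs \<Longrightarrow> sf_mono vs a (mono_var v) = a v"
proof (induction vs)
  case Nil then show ?case by simp
next
  case (Cons u vs)
  show ?case
  proof (cases "u = v")
    case True
    then have "v \<notin> set vs" using Cons by auto
    then have "sf_mono vs a (mono_var v) = sf_one P"
      unfolding sf_mono_def mono_var_def by (induction vs) auto
    then show ?thesis using True Cons.prems by (simp add: sf_mono_def mono_var_def)
  next
    case False
    then show ?thesis using Cons by (simp add: sf_mono_def mono_var_def)
  qed
qed

lemma sf_list_sum_closed [simp]: "set xs \<subseteq> carrier \<Longrightarrow> sf_list_sum P xs \<in> carrier"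
proof (induction xs)
  case (Cons x xs) then show ?case by (cases "xs = []") (auto simp: sf_list_sum_Cons)
qed simp

lemma sf_list_sum_append:
  "xs \<noteq> [] \<Longrightarrow> ys \<noteq> [] \<Longrightarrow> set xs \<subseteq> carrier \<Longrightarrow> set ys \<subseteq> carrier \<Longrightarrow>
    sf_list_sum P (xs @ ys) = sf_add P (sf_list_sum P xs) (sf_list_sum P ys)"
proof (induction xs)
  case (Cons x xs)
  then show ?case by (cases "xs = []") (auto simp: sf_list_sum_Cons sf_add_assoc)
qed simp

lemma sf_list_sum_mul:
  "xs \<noteq> [] \<Longrightarrow> set xs \<subseteq> carrier \<Longrightarrow> c \<in> carrier \<Longrightarrow>
    sf_list_sum P (map (sf_mul P c) xs) = sf_mul P c (sf_list_sum P xs)"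
proof (induction xs)
  case (Cons x xs)
  then show ?case by (cases "xs = []") (auto simp: sf_list_sum_Cons sf_distrib_left)
qed simp

lemma sf_list_sum_remove1:
  "x \<in> set ys \<Longrightarrow> set ys \<subseteq> carrier \<Longrightarrow> remove1 x ys \<noteq> [] \<Longrightarrow>
    sf_list_sum P ys = sf_add P x (sf_list_sum P (remove1 x ys))"
proof (induction ys)
  case Nil then show ?case by simp
next
  case (Cons y ys)
  show ?case
  proof (cases "y = x")
    case True then show ?thesis using Cons by (simp add: sf_list_sum_Cons)
  next
    case False
    then have x: "x \<in> set ys" using Cons by auto
    show ?thesis
    proof (cases "remove1 x ys = []")
      case True
      then have "ys = [x]" using x by (cases ys) (auto split: if_splits)
      then show ?thesis using False Cons.prems by (simp add: sf_add_comm)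
    next
      case False': False
      have "ys \<noteq> []" using x by auto
      then have "sf_list_sum P (y # ys) = sf_add P y (sf_add P x (sf_list_sum P (remove1 x ys)))"
        using Cons x False' by (simp add: sf_list_sum_Cons)
      also have "\<dots> = sf_add P x (sf_add P y (sf_list_sum P (remove1 x ys)))"
        using Cons.prems x by (intro sf_add_left_commute) (use set_remove1_subset[of x ys] in auto)
      finally show ?thesis using False False' by (simp add: sf_list_sum_Cons)
    qed
  qed
qed

lemma sf_list_sum_perm: "mset xs = mset ys \<Longrightarrow> set xs \<subseteq> carrier \<Longrightarrow> sf_list_sum P xs = sf_list_sum P ys"
proof (induction xs arbitrary: ys)
  case Nil then show ?case by simp
next
  case (Cons x xs)
  have x: "x \<in> set ys" and cy: "set ys \<subseteq> carrier" using Cons.prems by (metis list.set_intros(1) set_mset_mset)+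
  show ?case
  proof (cases "xs = []")
    case True
    then have "ys = [x]" using Cons.prems(1) by (cases ys) auto
    then show ?thesis using True by simp
  next
    case False
    have m: "mset xs = mset (remove1 x ys)"
      by (metis Cons.prems(1) add_mset_remove_trivial mset.simps(2) mset_remove1)
    then have "remove1 x ys \<noteq> []" using False by (metis mset_zero_iff)
    moreover have "sf_list_sum P xs = sf_list_sum P (remove1 x ys)" using Cons.IH[OF m] Cons.prems(2) by simp
    ultimately show ?thesis using False sf_list_sum_remove1[OF x cy] by (simp add: sf_list_sum_Cons)
  qed
qed

definition sf_posy :: "'v list \<Rightarrow> ('v \<Rightarrow> 'p) \<Rightarrow> ('v \<Rightarrow> nat) list \<Rightarrow> 'p" where
  "sf_posy vs a ms = sf_list_sum P (map (sf_mono vs a) ms)"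

lemma sf_posy_closed [simp]: "\<forall>v\<in>set vs. a v \<in> carrier \<Longrightarrow> sf_posy vs a xs \<in> carrier"
  unfolding sf_posy_def by (rule sf_list_sum_closed) auto

lemma sf_posy_append:
  "\<forall>v\<in>set vs. a v \<in> carrier \<Longrightarrow> xs \<noteq> [] \<Longrightarrow> ys \<noteq> [] \<Longrightarrow>
    sf_posy vs a (xs @ ys) = sf_add P (sf_posy vs a xs) (sf_posy vs a ys)"
  unfolding sf_posy_def by (subst map_append, rule sf_list_sum_append) (auto simp: image_subset_iff)

lemma sf_posy_mono_list_mul:
  assumes a: "\<forall>v\<in>set vs. a v \<in> carrier" and ys: "ys \<noteq> []"
  shows "xs \<noteq> [] \<Longrightarrow> sf_posy vs a (mono_list_mul xs ys) = sf_mul P (sf_posy vs a xs) (sf_posy vs a ys)"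
proof (induction xs)
  case Nil then show ?case by simp
next
  case (Cons x xs)
  have hx: "sf_posy vs a (map (\<lambda>y w. x w + y w) ys) = sf_mul P (sf_mono vs a x) (sf_posy vs a ys)"
  proof -
    have e: "map (sf_mono vs a) (map (\<lambda>y w. x w + y w) ys) = map (sf_mul P (sf_mono vs a x)) (map (sf_mono vs a) ys)"
      using a by (simp add: sf_mono_add)
    show ?thesis unfolding sf_posy_def e by (rule sf_list_sum_mul) (use ys a in auto)
  qed
  show ?case
  proof (cases "xs = []")
    case True then show ?thesis using hx by (simp add: mono_list_mul_Cons sf_posy_def)
  next
    case False
    have "sf_posy vs a (mono_list_mul (x # xs) ys) =
        sf_add P (sf_posy vs a (map (\<lambda>y w. x w + y w) ys)) (sf_posy vs a (mono_list_mul xs ys))"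
      unfolding mono_list_mul_Cons using ys False mono_list_mul_nonempty[OF False ys] a
      by (intro sf_posy_append) auto
    also have "\<dots> = sf_mul P (sf_add P (sf_mono vs a x) (sf_posy vs a xs)) (sf_posy vs a ys)"
      using hx Cons.IH[OF False] a by (simp add: sf_distrib_right)
    finally show ?thesis using False by (simp add: sf_posy_def sf_list_sum_Cons)
  qed
qed

lemma sfeval_sfexp_frac:
  assumes vs: "distinct vs" and a: "\<forall>v\<in>set vs. a v \<in> carrier" and e: "sfvars e \<subseteq> set vs"
  shows "sfeval P e a = sf_mul P (sf_posy vs a (fst (sfexp_frac e))) (sf_inv P (sf_posy vs a (snd (sfexp_frac e))))"
  using e
proof (induction e)
  case (SVar v)
  then show ?case using a sf_mono_mono_var[OF vs a, of v] by (simp add: sf_posy_def sf_mono_zero)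
next
  case (SAdd e f)
  then show ?case using sfexp_frac_nonempty[of e] sfexp_frac_nonempty[of f] a
    by (simp add: sf_frac_add sf_posy_mono_list_mul sf_posy_append mono_list_mul_nonempty
        sf_mul_comm[of "sf_posy vs a (snd (sfexp_frac e))"])
next
  case (SMul e f)
  then show ?case using sfexp_frac_nonempty[of e] sfexp_frac_nonempty[of f] a
    by (simp add: sf_frac_mul sf_posy_mono_list_mul)
next
  case (SDiv e f)
  then show ?case using sfexp_frac_nonempty[of e] sfexp_frac_nonempty[of f] a
    by (simp add: sf_frac_div sf_posy_mono_list_mul)
qed

theorem sfeval_eq_if_sfeval_real_eq:
  assumes vs: "distinct vs" and a: "\<forall>v\<in>set vs. a v \<in> carrier"
    and vars: "sfvars e1 \<subseteq> set vs" "sfvars e2 \<subseteq> set vs"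
    and eq: "\<forall>p. (\<forall>v. 0 < p v) \<longrightarrow> sfeval_real e1 p = sfeval_real e2 p"
  shows "sfeval P e1 a = sfeval P e2 a"
proof -
  obtain N1 D1 N2 D2 where frac: "sfexp_frac e1 = (N1, D1)" "sfexp_frac e2 = (N2, D2)" by fastforce
  have ne: "N1 \<noteq> []" "D1 \<noteq> []" "N2 \<noteq> []" "D2 \<noteq> []"
    using sfexp_frac_nonempty[of e1] sfexp_frac_nonempty[of e2] frac by auto
  have "posy_val (set vs) p (mono_list_mul N1 D2) = posy_val (set vs) p (mono_list_mul N2 D1)"
    if p: "\<forall>v. 0 < p v" for p
  proof -
    have "0 < posy_val (set vs) p D1" "0 < posy_val (set vs) p D2" using posy_val_pos[OF p] ne by auto
    moreover have "posy_val (set vs) p N1 / posy_val (set vs) p D1 = posy_val (set vs) p N2 / posy_val (set vs) p D2"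
      using eq p sfeval_real_sfexp_frac[OF _ p vars(1)] sfeval_real_sfexp_frac[OF _ p vars(2)] frac by simp
    ultimately show ?thesis by (simp add: posy_val_mono_list_mul field_simps)
  qed
  moreover have "\<forall>m\<in>set (mono_list_mul N1 D2) \<union> set (mono_list_mul N2 D1). \<forall>w. w \<notin> set vs \<longrightarrow> m w = 0"
    using sfexp_frac_supp[OF vars(1)] sfexp_frac_supp[OF vars(2)] frac by (auto simp: set_mono_list_mul)
  ultimately have "mset (mono_list_mul N1 D2) = mset (mono_list_mul N2 D1)"
    by (intro mset_eq_if_posy_val_eq) auto
  then have "sf_posy vs a (mono_list_mul N1 D2) = sf_posy vs a (mono_list_mul N2 D1)"
    unfolding sf_posy_def using a by (intro sf_list_sum_perm) auto
  then have "sf_mul P (sf_posy vs a N1) (sf_posy vs a D2) = sf_mul P (sf_posy vs a N2) (sf_posy vs a D1)"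
    using ne a by (simp add: sf_posy_mono_list_mul)
  then have "sf_mul P (sf_posy vs a N1) (sf_inv P (sf_posy vs a D1)) =
      sf_mul P (sf_posy vs a N2) (sf_inv P (sf_posy vs a D2))"
    using a by (intro sf_frac_eq_if_cross_eq) auto
  then show ?thesis using sfeval_sfexp_frac[OF vs a vars(1)] sfeval_sfexp_frac[OF vs a vars(2)] frac by simp
qed

end

definition real_sf :: "real semifield_ops" where
  "real_sf = \<lparr>sf_carrier = UNIV, sf_mul = (\<lambda>a b. a * b), sf_one = 1, sf_inv = inverse, sf_add = (\<lambda>a b. a + b)\<rparr>"

lemma real_sf_simps [simp]:
  "sf_mul real_sf = (\<lambda>a b. a * b)" "sf_one real_sf = 1" "sf_inv real_sf = inverse"
  "sf_add real_sf = (\<lambda>a b. a + b)" "sf_carrier real_sf = UNIV"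
  by (simp_all add: real_sf_def)

lemma funpow_mult_real: "((\<lambda>b. x * b) ^^ m) (1::real) = x ^ m"
  by (induction m) auto

lemma sf_pow_real_sf: "sf_pow real_sf x k = x powi k"
  by (simp add: sf_pow_def power_int_def funpow_mult_real power_inverse)

lemma sf_sum_real_sf: "sf_sum real_sf f m = (\<Sum>s=0..m. f s)"
proof -
  have "foldr (\<lambda>s acc. f s + acc) xs a = sum_list (map f xs) + a" for xs a
    by (induction xs) auto
  then have "sf_sum real_sf f m = sum_list (map f [1..<Suc m]) + f 0" by (simp add: sf_sum_def)
  also have "sum_list (map f [1..<Suc m]) = sum f {Suc 0..m}"
    by (simp only: interv_sum_list_conv_sum_set_nat set_upt atLeastLessThanSuc_atLeastAtMost One_nat_def)
  finally show ?thesis by (simp add: sum.atLeast_Suc_atMost[OF le0])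
qed

lemma sf_prod_real_sf: "sf_prod real_sf f n = (\<Prod>j<n. f j)"
proof -
  have "foldr (\<lambda>s acc. f s * acc) xs a = prod_list (map f xs) * a" for xs a
    by (induction xs) auto
  moreover have "prod_list (map f [0..<n]) = (\<Prod>j<n. f j)"
    by (induction n) (auto simp: lessThan_Suc mult.commute)
  ultimately show ?thesis by (simp add: sf_prod_def)
qed

lemma sf_hom_on_eval_at: "sf_hom_on fun_sf real_sf (\<lambda>f. f q) UNIV"
  by (simp add: sf_hom_on_def fun_sf_def)

lemma ln_powi: "0 < (x::real) \<Longrightarrow> ln (x powi k) = of_int k * ln x"
  by (cases "0 \<le> k") (auto simp: power_int_def ln_realpow ln_inverse)

lemma trop_sf_simps [simp]:
  "sf_mul trop_sf = (\<lambda>a b v. a v + b v)" "sf_inv trop_sf = (\<lambda>a v. - a v)"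
  "sf_one trop_sf = (\<lambda>v. 0)" "sf_add trop_sf = (\<lambda>a b v. min (a v) (b v))"
  by (simp_all add: trop_sf_def)

lemma funpow_add_trop: "((\<lambda>b v. a v + b v) ^^ m) (\<lambda>v. 0) = (\<lambda>v. int m * a v)"
  by (induction m) (auto simp: algebra_simps)

lemma sf_pow_trop_sf: "sf_pow trop_sf a k = (\<lambda>v. k * a v)"
proof (cases "0 \<le> k")
  case True then show ?thesis using funpow_add_trop[of "nat k" a] by (simp add: sf_pow_def)
next
  case False
  have "((\<lambda>b v. (- a v) + b v) ^^ nat (-k)) (\<lambda>v. 0) = (\<lambda>v. int (nat (-k)) * (- a v))"
    by (rule funpow_add_trop)
  then show ?thesis using False by (simp add: sf_pow_def)
qed

lemma sf_sum_trop_sf_eq_0: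
  assumes "\<forall>s\<le>m. 0 \<le> f s v" "f 0 v = 0"
  shows "sf_sum trop_sf f m v = 0"
proof -
  have "(\<forall>s\<in>set xs. 0 \<le> f s v) \<Longrightarrow> a v = 0 \<Longrightarrow> foldr (\<lambda>s acc w. min (f s w) (acc w)) xs a v = (0::int)"
    for xs a by (induction xs) auto
  then show ?thesis using assms unfolding sf_sum_def trop_sf_simps by simp
qed

lemma zt_trivial: "zt d k 0 = (\<lambda>v. 0)" "zt d k (d k) = (\<lambda>v. 0)"
  by (auto simp: zt_def)

lemma mutY_trop_sf_VZ:
  assumes "\<forall>i a b. Y i (VZ a b) = 0"
  shows "mutY trop_sf d (zt d) k B Y i (VZ a b) = 0"
proof -
  have "sf_sum trop_sf (\<lambda>s. sf_mul trop_sf (zt d k s) (sf_pow trop_sf (Y k) (int s))) (d k) (VZ a b) = 0"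
    using assms by (intro sf_sum_trop_sf_eq_0) (auto simp: sf_pow_trop_sf zt_def)
  then show ?thesis using assms by (auto simp: mutY_def sf_pow_trop_sf)
qed

lemma finite_yzvars: "finite (yzvars n d)"
proof -
  have "yzvars n d = VY ` {..<n} \<union> (\<Union>i<n. VZ i ` {1..<d i})" by (auto simp: yzvars_def)
  then show ?thesis by simp
qed

definition meval_ln :: "nat \<Rightarrow> (nat \<Rightarrow> nat) \<Rightarrow> (var \<Rightarrow> int) \<Rightarrow> (var \<Rightarrow> real) \<Rightarrow> real" where
  "meval_ln n d m q = (\<Sum>v\<in>yzvars n d. of_int (m v) * ln (q v))"

lemma meval_pos: "positive_point q \<Longrightarrow> 0 < meval n d m q"
  unfolding meval_def positive_point_def by (intro prod_pos ballI zero_less_power_int) auto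

lemma ln_meval:
  assumes q: "positive_point q"
  shows "ln (meval n d m q) = meval_ln n d m q"
proof -
  have pos: "0 < q v powi m v" for v using q by (intro zero_less_power_int) (simp add: positive_point_def)
  have "ln (meval n d m q) = (\<Sum>v\<in>yzvars n d. ln (q v powi m v))"
    unfolding meval_def by (rule ln_prod[OF finite_yzvars]) (use pos in \<open>metis less_irrefl\<close>)
  also have "\<dots> = meval_ln n d m q" unfolding meval_ln_def using q by (simp add: ln_powi positive_point_def)
  finally show ?thesis .
qed

lemma meval_ln_add: "meval_ln n d (\<lambda>v. a v + b v) q = meval_ln n d a q + meval_ln n d b q"
  by (simp add: meval_ln_def sum.distrib algebra_simps)

lemma meval_ln_scale: "meval_ln n d (\<lambda>v. k * a v) q = of_int k * meval_ln n d a q"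
  by (simp add: meval_ln_def sum_distrib_left algebra_simps)

lemma meval_uminus: "meval n d (\<lambda>v. - m v) q = inverse (meval n d m q)"
  using prod_inversef[of "\<lambda>v. q v powi m v" "yzvars n d"] by (simp add: meval_def power_int_minus comp_def)

lemma meval_zt:
  assumes "k < n" "s \<le> d k"
  shows "meval n d (zt d k s) q = (if s = 0 \<or> s = d k then 1 else q (zv d k s))"
proof (cases "s = 0 \<or> s = d k")
  case True then show ?thesis by (auto simp: meval_def zt_def)
next
  case False
  then have "zv d k s \<in> yzvars n d" using assms by (auto simp: zv_def yzvars_def)
  moreover have "meval n d (zt d k s) q = (\<Prod>v\<in>yzvars n d. if v = zv d k s then q v else 1)"
    unfolding meval_def zt_def using False assms by (intro prod.cong) auto
  ultimately show ?thesis using False finite_yzvars by simp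
qed

lemma meval_yt0:
  assumes "j < n"
  shows "meval n d (yt0 j) q = q (VY j)"
proof -
  have "meval n d (yt0 j) q = (\<Prod>v\<in>yzvars n d. if v = VY j then q v else 1)"
    unfolding meval_def yt0_def by (intro prod.cong) auto
  then show ?thesis using assms finite_yzvars by (simp add: yzvars_def)
qed

lemma meval_if_no_VZ:
  assumes "\<forall>a b. m (VZ a b) = 0"
  shows "meval n d m q = (\<Prod>j<n. q (VY j) powi m (VY j))"
proof -
  have "meval n d m q = (\<Prod>v\<in>VY ` {..<n}. q v powi m v)"
    unfolding meval_def
  proof (rule prod.mono_neutral_right[OF finite_yzvars])
    show "VY ` {..<n} \<subseteq> yzvars n d" by (auto simp: yzvars_def)
    show "\<forall>v\<in>yzvars n d - VY ` {..<n}. q v powi m v = 1" using assms by (auto simp: yzvars_def)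
  qed
  also have "\<dots> = (\<Prod>j<n. q (VY j) powi m (VY j))" by (subst prod.reindex) (auto simp: inj_on_def)
  finally show ?thesis .
qed

lemma mult_pos_eq_pos_mult:
  assumes "0 < (c::int)"
  shows "c * pos x = pos (c * x)"
proof (cases "0 \<le> x")
  case True
  then show ?thesis using assms by (simp add: pos_def)
next
  case False
  then have "c * x < 0" using assms by (simp add: mult_pos_neg)
  then show ?thesis using False by (simp add: pos_def)
qed

lemma skew_symmetrizable_diag:
  assumes "skew_symmetrizable n B" "k < n"
  shows "B k k = 0"
proof -
  obtain D where "D k > 0" "D k * B k k = - (D k * B k k)"
    using assms unfolding skew_symmetrizable_def by blast
  then show ?thesis by simp
qed

lemma skew_symmetrizable_mutB:
  assumes sk: "skew_symmetrizable n B" and k: "k < n"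
  shows "skew_symmetrizable n (mutB d k B)"
proof -
  obtain D where D: "\<forall>i<n. D i > 0" "\<forall>i<n. \<forall>j<n. D i * B i j = - (D j * B j i)"
    using sk unfolding skew_symmetrizable_def by blast
  have "D i * mutB d k B i j = - (D j * mutB d k B j i)" if i: "i < n" and j: "j < n" for i j
  proof -
    have e1: "D i * B i j = - (D j * B j i)" using D(2) i j by blast
    show ?thesis
    proof (cases "i = k \<or> j = k")
      case True then show ?thesis using e1 by (auto simp: mutB_def)
    next
      case False
      have e2: "D i * B i k = - (D k * B k i)" and e3: "D k * B k j = - (D j * B j k)"
        using D(2) i j k by blast+
      have Dpos: "D i > 0" "D j > 0" "D k > 0" using D(1) i j k by blast+
      have a: "D i * (pos (- B i k) * B k j) = - (D j * (pos (B k i) * B j k))"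
      proof -
        have "D i * (pos (- B i k) * B k j) = pos (- (D i * B i k)) * B k j"
          using mult_pos_eq_pos_mult[OF Dpos(1), of "- B i k"] by (simp add: algebra_simps)
        also have "\<dots> = pos (D k * B k i) * B k j" using e2 by simp
        also have "\<dots> = pos (B k i) * (D k * B k j)"
          using mult_pos_eq_pos_mult[OF Dpos(3), of "B k i"] by (simp add: algebra_simps)
        also have "\<dots> = - (D j * (pos (B k i) * B j k))" using e3 by (simp add: algebra_simps)
        finally show ?thesis .
      qed
      have b: "D i * (B i k * pos (B k j)) = - (D j * (B k i * pos (- B j k)))"
      proof -
        have "D i * (B i k * pos (B k j)) = (D i * B i k) * pos (B k j)" by (simp add: algebra_simps)
        also have "\<dots> = - (B k i * (D k * pos (B k j)))" using e2 by (simp add: algebra_simps)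
        also have "D k * pos (B k j) = pos (- (D j * B j k))"
          using mult_pos_eq_pos_mult[OF Dpos(3)] e3 by simp
        also have "\<dots> = D j * pos (- B j k)" using mult_pos_eq_pos_mult[OF Dpos(2), of "- B j k"] by simp
        finally show ?thesis by (simp add: algebra_simps)
      qed
      have m1: "D i * mutB d k B i j = D i * B i j + int (d k) * (D i * (pos (- B i k) * B k j + B i k * pos (B k j)))"
        and m2: "D j * mutB d k B j i = D j * B j i + int (d k) * (D j * (pos (- B j k) * B k i + B j k * pos (B k i)))"
        using False by (simp_all add: mutB_def algebra_simps)
      show ?thesis unfolding m1 m2 e1 using a b by (simp add: algebra_simps)
    qed
  qed
  then show ?thesis using D(1) unfolding skew_symmetrizable_def by blast
qed

section \<open>The separation formula for \<open>Y\<close>-functions\<close>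

definition yhat :: "nat \<Rightarrow> (nat \<Rightarrow> nat) \<Rightarrow> (nat \<Rightarrow> nat \<Rightarrow> int) \<Rightarrow> (nat \<Rightarrow> var \<Rightarrow> int)
    \<Rightarrow> (nat \<Rightarrow> (var \<Rightarrow> real) \<Rightarrow> real) \<Rightarrow> (var \<Rightarrow> real) \<Rightarrow> nat \<Rightarrow> real" where
  "yhat n d B Y X q i = meval n d (Y i) q * (\<Prod>j<n. X j q powi B j i)"

definition zval :: "(nat \<Rightarrow> nat) \<Rightarrow> (var \<Rightarrow> real) \<Rightarrow> nat \<Rightarrow> nat \<Rightarrow> real" where
  "zval d q k s = (if s = 0 \<or> s = d k then 1 else q (zv d k s))"

lemma yhat_pos: "positive_point q \<Longrightarrow> \<forall>j. 0 < X j q \<Longrightarrow> 0 < yhat n d B Y X q i"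
  unfolding yhat_def by (intro mult_pos_pos meval_pos prod_pos ballI zero_less_power_int) auto

lemma ln_yhat:
  assumes q: "positive_point q" and X: "\<forall>j. 0 < X j q"
  shows "ln (yhat n d B Y X q i) = meval_ln n d (Y i) q + (\<Sum>j<n. of_int (B j i) * ln (X j q))"
proof -
  have "ln (\<Prod>j<n. X j q powi B j i) = (\<Sum>j<n. ln (X j q powi B j i))"
    using X by (intro ln_prod) (auto simp: less_imp_neq[symmetric])
  also have "\<dots> = (\<Sum>j<n. of_int (B j i) * ln (X j q))" using X by (simp add: ln_powi)
  finally show ?thesis
    unfolding yhat_def using X ln_mult_pos[OF meval_pos[OF q]] ln_meval[OF q]
    by (simp add: prod_pos)
qed

lemma exchange_sum_pos:
  assumes "positive_point q" "0 < y"
  shows "0 < (\<Sum>s=0..d k. meval n d (zt d k s) q * y ^ s)"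
proof (rule sum_pos2[of _ 0])
  show "0 < meval n d (zt d k 0) q * y ^ 0" by (simp add: zt_trivial meval_def)
  show "\<And>s. s \<in> {0..d k} \<Longrightarrow> 0 \<le> meval n d (zt d k s) q * y ^ s"
    using meval_pos[OF assms(1)] assms(2) by (simp add: less_imp_le)
qed auto

lemma sf_sum_real_sf_exchange:
  assumes "k < n"
  shows "sf_sum real_sf (\<lambda>s. sf_mul real_sf (zval d q k s) (sf_pow real_sf y (int s))) (d k) =
    (\<Sum>s=0..d k. meval n d (zt d k s) q * y ^ s)"
  unfolding sf_sum_real_sf real_sf_simps sf_pow_real_sf
  using assms by (intro sum.cong) (auto simp: meval_zt zval_def power_int_of_nat)

lemma mutX_pos:
  assumes q: "positive_point q" and X: "\<forall>j. 0 < X j q"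
  shows "0 < mutX n d k B Y X j q"
proof (cases "j = k")
  case True
  have "0 < (\<Sum>s=0..d k. meval n d (zt d k s) q * yhat n d B Y X q k ^ s)"
    by (rule exchange_sum_pos[OF q yhat_pos[where q=q and X=X, OF q X]])
  then show ?thesis
    using True X meval_pos[OF q] by (simp add: mutX_def Let_def yhat_def prod_pos)
qed (use X in \<open>simp add: mutX_def\<close>)

lemma ln_mutX_self:
  fixes d :: "nat \<Rightarrow> nat" and k :: nat and Y :: "nat \<Rightarrow> var \<Rightarrow> int"
  assumes q: "positive_point q" and X: "\<forall>j. 0 < X j q"
  defines "T \<equiv> sf_sum trop_sf (\<lambda>s. sf_mul trop_sf (zt d k s) (sf_pow trop_sf (Y k) (int s))) (d k)"
  shows "ln (mutX n d k B Y X k q) =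
    - ln (X k q) + real (d k) * (\<Sum>j<n. of_int (pos (- B j k)) * ln (X j q))
    + ln (\<Sum>s=0..d k. meval n d (zt d k s) q * yhat n d B Y X q k ^ s) - meval_ln n d T q"
proof -
  define S where "S = (\<Sum>s=0..d k. meval n d (zt d k s) q * yhat n d B Y X q k ^ s)"
  define M where "M = (\<Prod>j<n. X j q ^ nat (pos (- B j k)))"
  have S_pos: "0 < S" unfolding S_def by (rule exchange_sum_pos[OF q yhat_pos[where q=q and X=X, OF q X]])
  have M_pos: "0 < M" unfolding M_def using X by (intro prod_pos) auto
  have "ln M = (\<Sum>j<n. ln (X j q ^ nat (pos (- B j k))))"
    unfolding M_def using X by (intro ln_prod) (auto simp: less_imp_neq[symmetric])
  then have ln_M: "ln M = (\<Sum>j<n. of_int (pos (- B j k)) * ln (X j q))"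
    using X by (simp add: ln_realpow pos_def)
  have "mutX n d k B Y X k q = inverse (X k q) * M ^ d k * S / meval n d T q"
    by (simp add: mutX_def M_def S_def T_def yhat_def Let_def)
  then show ?thesis
    using X S_pos M_pos meval_pos[OF q] ln_meval[OF q]
    by (simp add: ln_mult_pos ln_divide_pos ln_inverse ln_realpow ln_M S_def)
qed

lemma yhat_mutate_self:
  assumes Bkk: "B k k = 0"
  shows "yhat n d (mutB d k B) (mutY trop_sf d (zt d) k B Y) (mutX n d k B Y X) q k =
    inverse (yhat n d B Y X q k)"
proof -
  have "(\<Prod>j<n. mutX n d k B Y X j q powi mutB d k B j k) = (\<Prod>j<n. inverse (X j q powi B j k))"
    using Bkk by (intro prod.cong) (auto simp: mutB_def mutX_def power_int_minus)
  also have "\<dots> = inverse (\<Prod>j<n. X j q powi B j k)"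
    using prod_inversef[of "\<lambda>j. X j q powi B j k" "{..<n}"] by (simp add: comp_def)
  finally show ?thesis by (simp add: yhat_def mutY_def meval_uminus)
qed

text \<open>The update \<open>L(k := a)\<close> accounts for the one cluster variable that changes.\<close>
lemma sum_mutB_column:
  fixes L :: "nat \<Rightarrow> real"
  assumes k: "k < n" and i: "i \<noteq> k" and Bkk: "B k k = 0"
  shows "(\<Sum>j<n. of_int (mutB d k B j i) * (L(k := a)) j) =
    (\<Sum>j<n. of_int (B j i) * L j) - of_int (B k i) * (a + L k)
    + real (d k) * of_int (B k i) * (\<Sum>j<n. of_int (pos (- B j k)) * L j)
    + real (d k) * of_int (pos (B k i)) * (\<Sum>j<n. of_int (B j k) * L j)"
proof -
  have "(\<Sum>j<n. of_int (mutB d k B j i) * (L(k := a)) j) =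
      (\<Sum>j<n. of_int (B j i) * L j + (if j = k then - of_int (B k i) * (a + L k) else 0)
        + real (d k) * of_int (B k i) * (of_int (pos (- B j k)) * L j)
        + real (d k) * of_int (pos (B k i)) * (of_int (B j k) * L j))"
    using i Bkk by (intro sum.cong) (auto simp: mutB_def pos_def algebra_simps)
  also have "\<dots> = (\<Sum>j<n. of_int (B j i) * L j) - of_int (B k i) * (a + L k)
      + real (d k) * of_int (B k i) * (\<Sum>j<n. of_int (pos (- B j k)) * L j)
      + real (d k) * of_int (pos (B k i)) * (\<Sum>j<n. of_int (B j k) * L j)"
    using k by (simp add: sum.distrib sum_distrib_left)
  finally show ?thesis .
qed

lemma yhat_mutate_other:
  assumes q: "positive_point q" and X: "\<forall>j. 0 < X j q" and k: "k < n" and i: "i \<noteq> k"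
    and Bkk: "B k k = 0"
  shows "yhat n d (mutB d k B) (mutY trop_sf d (zt d) k B Y) (mutX n d k B Y X) q i =
    mutY real_sf d (zval d q) k B (yhat n d B Y X q) i"
proof -
  define yh where "yh = yhat n d B Y X q"
  define L where "L j = ln (X j q)" for j
  define S where "S = (\<Sum>s=0..d k. meval n d (zt d k s) q * yh k ^ s)"
  define T where "T = sf_sum trop_sf (\<lambda>s. sf_mul trop_sf (zt d k s) (sf_pow trop_sf (Y k) (int s))) (d k)"
  define c where "c = int (d k) * pos (B k i)"
  have yh_pos: "0 < yh j" for j unfolding yh_def using yhat_pos[where q=q and X=X, OF q X] .
  have S_pos: "0 < S" unfolding S_def using exchange_sum_pos[OF q yh_pos] .
  have X': "\<forall>j. 0 < mutX n d k B Y X j q" using mutX_pos[where q=q and X=X, OF q X] by blast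
  have rhs: "mutY real_sf d (zval d q) k B yh i = yh i * yh k powi c * S powi (- B k i)"
    using i sf_sum_real_sf_exchange[OF k] by (simp add: mutY_def sf_pow_real_sf S_def c_def)
  have Y': "mutY trop_sf d (zt d) k B Y i = (\<lambda>v. Y i v + c * Y k v + (- B k i) * T v)"
    using i by (simp add: mutY_def sf_pow_trop_sf T_def c_def algebra_simps)
  have L': "(\<lambda>j. ln (mutX n d k B Y X j q)) = L(k := ln (mutX n d k B Y X k q))"
    by (auto simp: L_def mutX_def)
  have "ln (yhat n d (mutB d k B) (mutY trop_sf d (zt d) k B Y) (mutX n d k B Y X) q i) =
      meval_ln n d (Y i) q + of_int c * meval_ln n d (Y k) q - of_int (B k i) * meval_ln n d T q
      + (\<Sum>j<n. of_int (mutB d k B j i) * (L(k := ln (mutX n d k B Y X k q))) j)"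
    unfolding ln_yhat[where q=q and X="mutX n d k B Y X", OF q X'] Y' meval_ln_add meval_ln_scale L'[symmetric] by simp
  also have "\<dots> = ln (yh i) + of_int c * ln (yh k) - of_int (B k i) * ln S"
    unfolding sum_mutB_column[where B=B, OF k i Bkk] ln_mutX_self[where q=q and X=X, OF q X] yh_def ln_yhat[where q=q and X=X, OF q X]
    by (simp add: L_def S_def T_def yh_def c_def algebra_simps)
  also have "\<dots> = ln (mutY real_sf d (zval d q) k B yh i)"
    unfolding rhs using yh_pos S_pos by (simp add: ln_mult_pos ln_powi)
  finally show ?thesis
    using yhat_pos[where q=q and X="mutX n d k B Y X", OF q X'] rhs yh_pos S_pos by (simp add: yh_def)
qed

lemma yhat_mutate:
  assumes "positive_point q" "\<forall>j. 0 < X j q" "k < n" "B k k = 0"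
  shows "yhat n d (mutB d k B) (mutY trop_sf d (zt d) k B Y) (mutX n d k B Y X) q i =
    mutY real_sf d (zval d q) k B (yhat n d B Y X q) i"
proof (cases "i = k")
  case True then show ?thesis using yhat_mutate_self[where B=B and k=k, OF assms(4)] by (simp add: mutY_def)
qed (use yhat_mutate_other[where q=q and X=X and B=B, OF assms(1-3) _ assms(4)] in blast)

lemma mutY_cong: "y i = y' i \<Longrightarrow> y k = y' k \<Longrightarrow> mutY S d z k B y i = mutY S d z k B y' i"
  by (simp add: mutY_def)

lemma yhat_ppat:
  assumes "set ks \<subseteq> {..<n}" "skew_symmetrizable n B" "positive_point q" "\<forall>j. 0 < X j q"
    "\<forall>i a b. Y i (VZ a b) = 0" "\<forall>i<n. yr i = yhat n d B Y X q i"
  shows "(\<forall>j. 0 < snd (snd (ppat n d B Y X ks)) j q) \<and>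
    (\<forall>i a b. fst (snd (ppat n d B Y X ks)) i (VZ a b) = 0) \<and>
    (\<forall>i<n. yhat n d (fst (ppat n d B Y X ks)) (fst (snd (ppat n d B Y X ks))) (snd (snd (ppat n d B Y X ks))) q i
      = snd (ypat real_sf d (zval d q) B yr ks) i)"
  using assms
proof (induction ks arbitrary: B Y X yr)
  case Nil then show ?case by simp
next
  case (Cons k ks)
  have k: "k < n" using Cons.prems by simp
  have Bkk: "B k k = 0" using skew_symmetrizable_diag[OF Cons.prems(2) k] .
  have yr': "\<forall>i<n. mutY real_sf d (zval d q) k B yr i =
      yhat n d (mutB d k B) (mutY trop_sf d (zt d) k B Y) (mutX n d k B Y X) q i"
    using Cons.prems(6) k yhat_mutate[where q=q and X=X and B=B, OF Cons.prems(3,4) k Bkk] by (auto intro: mutY_cong)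
  have "\<forall>i a b. mutY trop_sf d (zt d) k B Y i (VZ a b) = 0"
    using Cons.prems(5) by (auto intro: mutY_trop_sf_VZ)
  then show ?case
    using Cons.IH[of "mutB d k B" "mutX n d k B Y X" "mutY trop_sf d (zt d) k B Y" "mutY real_sf d (zval d q) k B yr"]
      Cons.prems skew_symmetrizable_mutB[OF Cons.prems(2) k] mutX_pos[where q=q and X=X, OF Cons.prems(3,4)] yr'
    by simp
qed

lemma fst_ppat: "fst (ppat n d B Y X ks) = fold (mutB d) ks B"
  by (induction ks arbitrary: B Y X) auto

lemma Yfun_eq_ypat_real_sf:
  "set ks \<subseteq> {..<n} \<Longrightarrow> i < n \<Longrightarrow> Yfun n d B ks i p = snd (ypat real_sf d (zval d p) B (\<lambda>j. p (VY j)) ks) i"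
  unfolding Yfun_def
  using sf_hom_on_ypat[OF sf_hom_on_eval_at[of p], where ks=ks and n=n and d=d and B=B
      and z="\<lambda>k s p. if s = 0 \<or> s = d k then 1 else p (zv d k s)" and z'="zval d p"
      and y="\<lambda>j p. p (VY j)" and y'="\<lambda>j. p (VY j)"]
  by (simp add: zval_def)

definition x_one :: "(var \<Rightarrow> real) \<Rightarrow> var \<Rightarrow> real" where
  "x_one p = (\<lambda>v. case v of VX _ \<Rightarrow> 1 | _ \<Rightarrow> p v)"

theorem Yfun_separation:
  assumes ks: "set ks \<subseteq> {..<n}" and sk: "skew_symmetrizable n B" and i: "i < n" and p: "positive_point p"
  shows "Yfun n d B ks i p = (\<Prod>j<n. p (VY j) powi Cmat n d B ks j i) *
           (\<Prod>j<n. Fpoly n d B ks j p powi fold (mutB d) ks B j i)"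
proof -
  define X0 where "X0 = (\<lambda>(j::nat) (p::var \<Rightarrow> real). p (VX j))"
  define R where "R = ppat n d B yt0 X0 ks"
  have p1: "positive_point (x_one p)" using p by (auto simp: positive_point_def x_one_def split: var.split)
  have "\<forall>i<n. p (VY i) = yhat n d B yt0 X0 (x_one p) i"
    by (auto simp: yhat_def meval_yt0 X0_def x_one_def)
  note R = yhat_ppat[OF ks sk p1 _ _ this, unfolded R_def[symmetric]]
  have pr: "principal n d B ks = R" by (simp add: principal_def R_def X0_def)
  have "zval d p = zval d (x_one p)" by (auto simp: zval_def x_one_def zv_def fun_eq_iff)
  then have "Yfun n d B ks i p = yhat n d (fst R) (fst (snd R)) (snd (snd R)) (x_one p) i"
    using R i Yfun_eq_ypat_real_sf[OF ks i, of d B p] by (simp add: X0_def x_one_def yt0_def)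
  also have "\<dots> = meval n d (fst (snd R) i) (x_one p) * (\<Prod>j<n. snd (snd R) j (x_one p) powi fst R j i)"
    by (simp add: yhat_def)
  also have "meval n d (fst (snd R) i) (x_one p) = (\<Prod>j<n. p (VY j) powi Cmat n d B ks j i)"
    using R by (subst meval_if_no_VZ) (auto simp: Cmat_def pr x_one_def X0_def yt0_def)
  also have "(\<Prod>j<n. snd (snd R) j (x_one p) powi fst R j i) = (\<Prod>j<n. Fpoly n d B ks j p powi fold (mutB d) ks B j i)"
    by (simp add: Fpoly_def pr x_one_def R_def fst_ppat)
  finally show ?thesis .
qed

section \<open>Subtraction-free expressions for the \<open>F\<close>-polynomials and \<open>Y\<close>-functions\<close>

text \<open>A subtraction-free expression for the constant \<open>1\<close> needs a variable, hence \<open>n > 0\<close>.\<close>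
definition sfexp_one :: "var sfexp" where
  "sfexp_one = SDiv (SVar (VY 0)) (SVar (VY 0))"

lemma sfeval_real_sfexp_one: "positive_point p \<Longrightarrow> sfeval_real sfexp_one p = 1"
  by (simp add: sfexp_one_def positive_point_def less_imp_neq[symmetric])

lemma sfvars_sfexp_one: "0 < n \<Longrightarrow> sfvars sfexp_one \<subseteq> yzvars n d"
  by (simp add: sfexp_one_def yzvars_def)

definition sf_representable :: "nat \<Rightarrow> (nat \<Rightarrow> nat) \<Rightarrow> ((var \<Rightarrow> real) \<Rightarrow> real) \<Rightarrow> bool" where
  "sf_representable n d f \<longleftrightarrow>
     (\<exists>e. sfvars e \<subseteq> yzvars n d \<and> (\<forall>p. positive_point p \<longrightarrow> sfeval_real e p = f (x_one p)))"

lemma sf_representable_one: "0 < n \<Longrightarrow> sf_representable n d (\<lambda>p. 1)"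
  unfolding sf_representable_def using sfeval_real_sfexp_one sfvars_sfexp_one by blast

lemma sf_representable_binop:
  fixes C :: "var sfexp \<Rightarrow> var sfexp \<Rightarrow> var sfexp" and op :: "real \<Rightarrow> real \<Rightarrow> real"
  assumes "sf_representable n d f" "sf_representable n d g"
    and "\<And>e1 e2 p. sfeval_real (C e1 e2) p = op (sfeval_real e1 p) (sfeval_real e2 p)"
    and "\<And>e1 e2. sfvars (C e1 e2) = sfvars e1 \<union> sfvars e2"
  shows "sf_representable n d (\<lambda>p. op (f p) (g p))"
proof -
  obtain e1 e2 where "sfvars e1 \<subseteq> yzvars n d" "\<forall>p. positive_point p \<longrightarrow> sfeval_real e1 p = f (x_one p)"
    "sfvars e2 \<subseteq> yzvars n d" "\<forall>p. positive_point p \<longrightarrow> sfeval_real e2 p = g (x_one p)"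
    using assms(1,2) unfolding sf_representable_def by blast
  then show ?thesis unfolding sf_representable_def using assms(3,4) by (intro exI[of _ "C e1 e2"]) auto
qed

lemma sf_representable_mult:
  "sf_representable n d f \<Longrightarrow> sf_representable n d g \<Longrightarrow> sf_representable n d (\<lambda>p. f p * g p)"
  by (rule sf_representable_binop[where C = SMul]) auto

lemma sf_representable_add:
  "sf_representable n d f \<Longrightarrow> sf_representable n d g \<Longrightarrow> sf_representable n d (\<lambda>p. f p + g p)"
  by (rule sf_representable_binop[where C = SAdd]) auto

lemma sf_representable_divide:
  "sf_representable n d f \<Longrightarrow> sf_representable n d g \<Longrightarrow> sf_representable n d (\<lambda>p. f p / g p)"
  by (rule sf_representable_binop[where C = SDiv]) auto

lemma sf_representable_inverse: "0 < n \<Longrightarrow> sf_representable n d f \<Longrightarrow> sf_representable n d (\<lambda>p. inverse (f p))"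
  using sf_representable_divide[OF sf_representable_one, of n d f] by (simp add: inverse_eq_divide)

lemma sf_representable_var: "v \<in> yzvars n d \<Longrightarrow> sf_representable n d (\<lambda>p. p v)"
  unfolding sf_representable_def by (intro exI[of _ "SVar v"]) (auto simp: x_one_def yzvars_def)

lemma sf_representable_VX: "0 < n \<Longrightarrow> sf_representable n d (\<lambda>p. p (VX j))"
  unfolding sf_representable_def
  by (intro exI[of _ sfexp_one]) (auto simp: x_one_def sfeval_real_sfexp_one sfvars_sfexp_one)

lemma sf_representable_power: "0 < n \<Longrightarrow> sf_representable n d f \<Longrightarrow> sf_representable n d (\<lambda>p. f p ^ m)"
  by (induction m) (auto intro: sf_representable_one sf_representable_mult)

lemma sf_representable_powi: "0 < n \<Longrightarrow> sf_representable n d f \<Longrightarrow> sf_representable n d (\<lambda>p. f p powi k)"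
  by (cases "0 \<le> k") (auto simp: power_int_def intro: sf_representable_power sf_representable_inverse)

lemma sf_representable_prod:
  assumes "0 < n"
  shows "finite A \<Longrightarrow> \<forall>j\<in>A. sf_representable n d (f j) \<Longrightarrow> sf_representable n d (\<lambda>p. \<Prod>j\<in>A. f j p)"
  by (induction A rule: finite_induct) (auto intro: sf_representable_one[OF assms] sf_representable_mult)

lemma sf_representable_sum:
  "\<forall>s\<le>(m::nat). sf_representable n d (f s) \<Longrightarrow> sf_representable n d (\<lambda>p. \<Sum>s=0..m. f s p)"
  by (induction m) (auto simp: sum.atLeast0_atMost_Suc intro: sf_representable_add)

lemma sf_representable_meval: "0 < n \<Longrightarrow> sf_representable n d (meval n d m)"
  unfolding meval_def[abs_def]
  by (intro sf_representable_prod finite_yzvars ballI sf_representable_powi sf_representable_var)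

lemma sf_representable_mutX:
  assumes n: "0 < n" and X: "\<forall>j. sf_representable n d (X j)"
  shows "sf_representable n d (mutX n d k B Y X j)"
proof (cases "j = k")
  case True
  have yhat: "sf_representable n d (\<lambda>p. meval n d (Y k) p * (\<Prod>j<n. X j p powi B j k))"
    using n X by (intro sf_representable_mult sf_representable_meval sf_representable_prod ballI
        sf_representable_powi) auto
  have "sf_representable n d (\<lambda>p. inverse (X k p) * (\<Prod>j<n. X j p ^ nat (pos (- B j k))) ^ d k
      * (\<Sum>s=0..d k. meval n d (zt d k s) p * (meval n d (Y k) p * (\<Prod>j<n. X j p powi B j k)) ^ s)
      / meval n d (sf_sum trop_sf (\<lambda>s. sf_mul trop_sf (zt d k s) (sf_pow trop_sf (Y k) (int s))) (d k)) p)"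
  proof (intro sf_representable_divide sf_representable_mult sf_representable_inverse sf_representable_meval[OF n])
    show "sf_representable n d (\<lambda>p. (\<Prod>j<n. X j p ^ nat (pos (- B j k))) ^ d k)"
      using n X by (intro sf_representable_power sf_representable_prod ballI) auto
    show "sf_representable n d
        (\<lambda>p. \<Sum>s=0..d k. meval n d (zt d k s) p * (meval n d (Y k) p * (\<Prod>j<n. X j p powi B j k)) ^ s)"
      by (intro sf_representable_sum allI impI sf_representable_mult sf_representable_meval[OF n]
          sf_representable_power[OF n yhat])
  qed (use n X in auto)
  then show ?thesis using True by (simp add: mutX_def Let_def)
qed (use X in \<open>simp add: mutX_def\<close>)

lemma sf_representable_ppat:
  "0 < n \<Longrightarrow> \<forall>j. sf_representable n d (X j) \<Longrightarrow> sf_representable n d (snd (snd (ppat n d B Y X ks)) j)"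
  by (induction ks arbitrary: B Y X) (auto intro: sf_representable_mutX)

definition Fexp :: "nat \<Rightarrow> (nat \<Rightarrow> nat) \<Rightarrow> (nat \<Rightarrow> nat \<Rightarrow> int) \<Rightarrow> nat list \<Rightarrow> nat \<Rightarrow> var sfexp" where
  "Fexp n d B ks j = (SOME e. sfvars e \<subseteq> yzvars n d \<and>
     (\<forall>p. positive_point p \<longrightarrow> sfeval_real e p = Fpoly n d B ks j p))"

lemma Fexp_represents_Fpoly:
  assumes "0 < n"
  shows "sfvars (Fexp n d B ks j) \<subseteq> yzvars n d \<and>
    (\<forall>p. positive_point p \<longrightarrow> sfeval_real (Fexp n d B ks j) p = Fpoly n d B ks j p)"
proof -
  have "sf_representable n d (snd (snd (principal n d B ks)) j)"
    unfolding principal_def using assms by (intro sf_representable_ppat) (auto intro: sf_representable_VX)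
  then have "\<exists>e. sfvars e \<subseteq> yzvars n d \<and> (\<forall>p. positive_point p \<longrightarrow> sfeval_real e p = Fpoly n d B ks j p)"
    unfolding sf_representable_def Fpoly_def x_one_def by blast
  then show ?thesis unfolding Fexp_def by (rule someI_ex)
qed

lemma eval_in_Fpoly: "eval_in P n d (Fpoly n d B ks j) a = sfeval P (Fexp n d B ks j) a"
  by (simp add: eval_in_def Fexp_def)

text \<open>Not a semifield: the evaluation maps are homomorphisms only on expressions in the
  coefficient variables, where \<open>sfexp_one\<close> denotes \<open>1\<close>.\<close>
definition sfexp_sf :: "var sfexp semifield_ops" where
  "sfexp_sf = \<lparr>sf_carrier = UNIV, sf_mul = SMul, sf_one = sfexp_one, sf_inv = SDiv sfexp_one, sf_add = SAdd\<rparr>"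

lemma sfexp_sf_simps [simp]:
  "sf_mul sfexp_sf = SMul" "sf_one sfexp_sf = sfexp_one" "sf_inv sfexp_sf = SDiv sfexp_one" "sf_add sfexp_sf = SAdd"
  by (simp_all add: sfexp_sf_def)

lemma (in semifield_struct) sfeval_closed:
  "sfvars e \<subseteq> V \<Longrightarrow> \<forall>v\<in>V. a v \<in> carrier \<Longrightarrow> sfeval P e a \<in> carrier"
  by (induction e) auto

lemma (in semifield_struct) sf_hom_on_sfeval:
  assumes n: "0 < n" and a: "\<forall>v\<in>yzvars n d. a v \<in> carrier"
  shows "sf_hom_on sfexp_sf P (\<lambda>e. sfeval P e a) {e. sfvars e \<subseteq> yzvars n d}"
proof -
  have "VY 0 \<in> yzvars n d" using n by (simp add: yzvars_def)
  then have "sfeval P sfexp_one a = sf_one P" using a by (simp add: sfexp_one_def)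
  then show ?thesis unfolding sf_hom_on_def using sfvars_sfexp_one[OF n] sfeval_closed[OF _ a]
    by (auto simp: sfexp_one_def)
qed

lemma sf_hom_on_sfeval_real:
  assumes n: "0 < n" and p: "positive_point p"
  shows "sf_hom_on sfexp_sf real_sf (\<lambda>e. sfeval_real e p) {e. sfvars e \<subseteq> yzvars n d}"
  unfolding sf_hom_on_def using sfvars_sfexp_one[OF n] sfeval_real_sfexp_one[OF p]
  by (auto simp: inverse_eq_divide simp del: sfeval_real.simps(4)) (auto simp: sfexp_one_def)

definition zexp :: "(nat \<Rightarrow> nat) \<Rightarrow> nat \<Rightarrow> nat \<Rightarrow> var sfexp" where
  "zexp d k s = (if s = 0 \<or> s = d k then sfexp_one else SVar (zv d k s))"

definition Yexp :: "(nat \<Rightarrow> nat) \<Rightarrow> (nat \<Rightarrow> nat \<Rightarrow> int) \<Rightarrow> nat list \<Rightarrow> nat \<Rightarrow> var sfexp" where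
  "Yexp d B ks i = snd (ypat sfexp_sf d (zexp d) B (\<lambda>j. SVar (VY j)) ks) i"

lemma zexp_in_yzvars: "0 < n \<Longrightarrow> k < n \<Longrightarrow> s \<le> d k \<Longrightarrow> sfvars (zexp d k s) \<subseteq> yzvars n d"
  using sfvars_sfexp_one by (auto simp: zexp_def zv_def yzvars_def)

lemma sfeval_real_Yexp:
  assumes ks: "set ks \<subseteq> {..<n}" and i: "i < n" and p: "positive_point p"
  shows "sfvars (Yexp d B ks i) \<subseteq> yzvars n d \<and> sfeval_real (Yexp d B ks i) p = Yfun n d B ks i p"
proof -
  have n: "0 < n" using i by simp
  have z: "\<forall>k<n. \<forall>s\<le>d k. zexp d k s \<in> {e. sfvars e \<subseteq> yzvars n d} \<and> sfeval_real (zexp d k s) p = zval d p k s"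
    using zexp_in_yzvars[OF n] sfeval_real_sfexp_one[OF p] by (auto simp: zexp_def zval_def)
  have y: "\<forall>j<n. SVar (VY j) \<in> {e. sfvars e \<subseteq> yzvars n d} \<and> sfeval_real (SVar (VY j)) p = p (VY j)"
    by (simp add: yzvars_def)
  show ?thesis
    using sf_hom_on_ypat[OF sf_hom_on_sfeval_real[where d=d, OF n p] ks z y] i Yfun_eq_ypat_real_sf[OF ks i, of d B p]
    by (simp add: Yexp_def)
qed

lemma sfvars_Yexp: "set ks \<subseteq> {..<n} \<Longrightarrow> i < n \<Longrightarrow> sfvars (Yexp d B ks i) \<subseteq> yzvars n d"
  using sfeval_real_Yexp[of ks n i "\<lambda>_. 1"] by (simp add: positive_point_def)

definition Ysep_exp :: "nat \<Rightarrow> (nat \<Rightarrow> nat) \<Rightarrow> (nat \<Rightarrow> nat \<Rightarrow> int) \<Rightarrow> nat list \<Rightarrow> nat \<Rightarrow> var sfexp" where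
  "Ysep_exp n d B ks i = SMul
     (sf_prod sfexp_sf (\<lambda>j. sf_pow sfexp_sf (SVar (VY j)) (Cmat n d B ks j i)) n)
     (sf_prod sfexp_sf (\<lambda>j. sf_pow sfexp_sf (Fexp n d B ks j) (fold (mutB d) ks B j i)) n)"

lemma sf_hom_on_Ysep_exp:
  assumes n: "0 < n" and h: "sf_hom_on sfexp_sf T h {e. sfvars e \<subseteq> yzvars n d}"
  shows "sfvars (Ysep_exp n d B ks i) \<subseteq> yzvars n d \<and>
    h (Ysep_exp n d B ks i) =
      sf_mul T (sf_prod T (\<lambda>j. sf_pow T (h (SVar (VY j))) (Cmat n d B ks j i)) n)
        (sf_prod T (\<lambda>j. sf_pow T (h (Fexp n d B ks j)) (fold (mutB d) ks B j i)) n)"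
proof -
  have "\<forall>j<n. SVar (VY j) \<in> {e. sfvars e \<subseteq> yzvars n d}" "\<forall>j<n. Fexp n d B ks j \<in> {e. sfvars e \<subseteq> yzvars n d}"
    using Fexp_represents_Fpoly[OF n] by (auto simp: yzvars_def)
  then show ?thesis
    using sf_hom_on_prod_pow[OF h] sf_hom_onD(5)[OF h] by (simp add: Ysep_exp_def)
qed

lemma sfeval_real_Ysep_exp:
  assumes "set ks \<subseteq> {..<n}" "skew_symmetrizable n B" "i < n" and p: "positive_point p"
  shows "sfeval_real (Ysep_exp n d B ks i) p = Yfun n d B ks i p"
proof -
  have n: "0 < n" using assms(3) by simp
  show ?thesis
    using sf_hom_on_Ysep_exp[OF n sf_hom_on_sfeval_real[where d=d, OF n p]] Fexp_represents_Fpoly[OF n] p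
      Yfun_separation[OF assms]
    by (simp add: sf_prod_real_sf sf_pow_real_sf cong: prod.cong)
qed

context semifield_struct
begin

lemma sfeval_Yexp:
  assumes ks: "set ks \<subseteq> {..<n}" and i: "i < n"
    and a: "\<forall>v\<in>yzvars n d. a v \<in> carrier" "\<forall>j<n. a (VY j) = y j" "\<forall>k s. a (VZ k s) = z k s"
    and z1: "\<forall>k<n. z k 0 = sf_one P \<and> z k (d k) = sf_one P"
    and zsym: "\<forall>k<n. \<forall>s\<le>d k. z k s = z k (d k - s)"
  shows "sfeval P (Yexp d B ks i) a = snd (ypat P d z B y ks) i"
proof -
  have n: "0 < n" using i by simp
  note h = sf_hom_on_sfeval[OF n a(1)]
  have zP: "sfeval P (zexp d k s) a = z k s" if k: "k < n" and s: "s \<le> d k" for k s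
  proof (cases "s = 0 \<or> s = d k")
    case True
    have "sfeval P sfexp_one a = sf_one P" using sf_hom_onD(2)[OF h] by simp
    then show ?thesis using True z1 k by (auto simp: zexp_def)
  next
    case False
    have "z k s = z k (d k - s)" using zsym k s by blast
    then have "z k (min s (d k - s)) = z k s" by (simp add: min_def)
    then show ?thesis using False a(3) by (simp add: zexp_def zv_def)
  qed
  have z: "\<forall>k<n. \<forall>s\<le>d k. zexp d k s \<in> {e. sfvars e \<subseteq> yzvars n d} \<and> sfeval P (zexp d k s) a = z k s"
    by (simp add: zP zexp_in_yzvars[OF n])
  have y: "\<forall>j<n. SVar (VY j) \<in> {e. sfvars e \<subseteq> yzvars n d} \<and> sfeval P (SVar (VY j)) a = y j"
    using a(2) by (simp add: yzvars_def)
  show ?thesis using sf_hom_on_ypat[OF h ks z y] i by (simp add: Yexp_def)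
qed

theorem ypat_separation:
  assumes sk: "skew_symmetrizable n B" and ks: "set ks \<subseteq> {..<n}" and i: "i < n"
    and y: "\<forall>j<n. y j \<in> carrier" and z: "\<forall>k<n. \<forall>s\<le>d k. z k s \<in> carrier"
    and z1: "\<forall>k<n. z k 0 = sf_one P \<and> z k (d k) = sf_one P"
    and zsym: "\<forall>k<n. \<forall>s\<le>d k. z k s = z k (d k - s)"
  defines "a \<equiv> \<lambda>v. case v of VY l \<Rightarrow> y l | VZ l s \<Rightarrow> z l s | VX _ \<Rightarrow> sf_one P"
  shows "snd (ypat P d z B y ks) i =
    sf_mul P (sf_prod P (\<lambda>j. sf_pow P (y j) (Cmat n d B ks j i)) n)
      (sf_prod P (\<lambda>j. sf_pow P (eval_in P n d (Fpoly n d B ks j) a) (fst (ypat P d z B y ks) j i)) n)"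
proof -
  have n: "0 < n" using i by simp
  have a_carrier: "\<forall>v\<in>yzvars n d. a v \<in> carrier" using y z by (auto simp: yzvars_def a_def)
  note Ysep = sf_hom_on_Ysep_exp[OF n sf_hom_on_sfeval[OF n a_carrier], of B ks i]
  obtain vs where vs: "distinct vs" "set vs = yzvars n d"
    using finite_distinct_list[OF finite_yzvars] by blast
  have "sfeval P (Yexp d B ks i) a = sfeval P (Ysep_exp n d B ks i) a"
    using sfeval_real_Yexp[OF ks i] sfeval_real_Ysep_exp[OF ks sk i] sfvars_Yexp[OF ks i] Ysep a_carrier
    by (intro sfeval_eq_if_sfeval_real_eq[OF vs(1)]) (auto simp: vs(2) positive_point_def)
  moreover have "sfeval P (Yexp d B ks i) a = snd (ypat P d z B y ks) i"
    using sfeval_Yexp[OF ks i a_carrier _ _ z1 zsym] by (simp add: a_def)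
  ultimately show ?thesis using Ysep by (simp add: eval_in_Fpoly fst_ypat a_def)
qed

end

theorem mainTheorem17:
  fixes P :: "('p, 'm) semifield_ops_scheme"
    and n :: nat and d :: "nat \<Rightarrow> nat" and B :: "nat \<Rightarrow> nat \<Rightarrow> int"
    and y :: "nat \<Rightarrow> 'p" and z :: "nat \<Rightarrow> nat \<Rightarrow> 'p"
  assumes "semifield P"
    and "\<forall>i<n. 0 < d i"
    and "skew_symmetrizable n B"
    and "\<forall>j<n. y j \<in> sf_carrier P"
    and "\<forall>i<n. \<forall>s\<le>d i. z i s \<in> sf_carrier P"
    and "\<forall>i<n. z i 0 = sf_one P \<and> z i (d i) = sf_one P"
    and "\<forall>i<n. \<forall>s\<le>d i. z i s = z i (d i - s)"
  shows "(\<forall>ks. tree_vertex n ks \<longrightarrow> (\<forall>i<n.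
            snd (ypat P d z B y ks) i =
              sf_mul P (sf_prod P (\<lambda>j. sf_pow P (y j) (Cmat n d B ks j i)) n)
                (sf_prod P (\<lambda>j. sf_pow P
                    (eval_in P n d (Fpoly n d B ks j)
                       (\<lambda>v. case v of VY l \<Rightarrow> y l | VZ l s \<Rightarrow> z l s | VX _ \<Rightarrow> sf_one P))
                    (fst (ypat P d z B y ks) j i)) n)))
       \<and> (\<forall>ks. tree_vertex n ks \<longrightarrow> (\<forall>i<n. \<forall>p. positive_point p \<longrightarrow>
            Yfun n d B ks i p =
              (\<Prod>j<n. p (VY j) powi Cmat n d B ks j i)
              * (\<Prod>j<n. Fpoly n d B ks j p powi fst (ypat P d z B y ks) j i)))"
proof -
  interpret semifield_struct P by unfold_locales (fact assms(1))
  show ?thesis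
    using ypat_separation[OF assms(3) _ _ assms(4-7)] Yfun_separation[OF _ assms(3)]
    by (auto simp: tree_vertex_def fst_ypat)
qed

end
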